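(* James bundles are natural: if $f\colon C\to D$ is a $\square$-map, then $\zeta^n(C)$ is the pull-back $f^*(\zeta^n(D))$; that is, the map $|J^n(C)|\to|J^n(D)|$ induced by $(x,\lambda)\mapsto(f(x),\lambda)$ together with the projections $p_n$ forms a pull-back square over $|f|\colon|C|\to|D|$.
   Context: A $\square$-set $C$: sets $C_n$, face maps $\partial_i^\epsilon\colon C_n\to C_{n-1}$ ($1\le i\le n$, $\epsilon\in\{0,1\}$) with $\partial^\eta_{j-1}\partial^\epsilon_i=\partial^\epsilon_i\partial^\eta_j$ for $i<j$; equivalently a contravariant functor on cubes $I^n$ and face maps $\mu$ (order-preserving insertion of constant coordinates $0$ or $1$), with induced maps $\mu^*$. A $\square$-map $f\colon C\to D$ is a family $f_n\colon C_n\to D_n$ commuting with all face maps. Realisation $|C|=\coprod C_n\times I^n/((\mu^*x,t)\sim(x,\mu t))$. $P^{n+k}_k$ is the set of projections $\lambda\colon I^{n+k}\to I^k$, $(x_1,\dots,x_{n+k})\mapsto(x_{i_1},\dots,x_{i_k})$, $i_1<\dots<i_k$. For a face map $\mu\colon I^l\to I^k$ there are unique $\mu^\sharp(\lambda)\in P^{n+l}_l$ and face map $\mu_\lambda\colon I^{n+l}\to I^{n+k}$ with $\lambda\mu_\lambda=\mu\,\mu^\sharp(\lambda)$ a pull-back square. The $n$-th James complex $J^n(C)$ has $J^n(C)_k=C_{n+k}\times P^{n+k}_k$ and $\mu^*(x,\lambda)=(\mu^*_\lambda x,\mu^\sharp(\lambda))$. With $s_\lambda\colon I^k\to I^{n+k}$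 the section of $\lambda$ inserting $1/2$ in the collapsed coordinates, $p_n\colon|J^n(C)|\to|C|$, $p_n[(c,\lambda),t]=[c,s_\lambda(t)]$, is a codimension-$n$ mock bundle projection; this mock bundle is the $n$-th James bundle $\zeta^n(C)$. *)

theory Defs
  imports "HOL-Analysis.Analysis"
begin

text \<open>A cubical set (box-set) is given by its cells Cs n (the set C_n) and face maps
  d n i e : C_n \<rightarrow> C_(n-1), for 1 \<le> i \<le> n, where e = False means epsilon = 0
  and e = True means epsilon = 1.\<close>

definition is_cset :: "(nat \<Rightarrow> 'a set) \<Rightarrow> (nat \<Rightarrow> nat \<Rightarrow> bool \<Rightarrow> 'a \<Rightarrow> 'a) \<Rightarrow> bool" where
  "is_cset Cs d \<longleftrightarrow>
     (\<forall>n i e x. 1 \<le> i \<and> i \<le> n \<and> x \<in> Cs n \<longrightarrow> d n i e x \<in> Cs (n - 1)) \<and>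
     (\<forall>n i j e h x. 1 \<le> i \<and> i < j \<and> j \<le> n \<and> x \<in> Cs n \<longrightarrow>
        d (n - 1) (j - 1) h (d n i e x) = d (n - 1) i e (d n j h x))"

definition is_cmap :: "(nat \<Rightarrow> 'a set) \<Rightarrow> (nat \<Rightarrow> nat \<Rightarrow> bool \<Rightarrow> 'a \<Rightarrow> 'a) \<Rightarrow>
    (nat \<Rightarrow> 'b set) \<Rightarrow> (nat \<Rightarrow> nat \<Rightarrow> bool \<Rightarrow> 'b \<Rightarrow> 'b) \<Rightarrow> (nat \<Rightarrow> 'a \<Rightarrow> 'b) \<Rightarrow> bool" where
  "is_cmap Cs d Ds d' f \<longleftrightarrow>
     (\<forall>n x. x \<in> Cs n \<longrightarrow> f n x \<in> Ds n) \<and>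
     (\<forall>n i e x. 1 \<le> i \<and> i \<le> n \<and> x \<in> Cs n \<longrightarrow> f (n - 1) (d n i e x) = d' n i e (f n x))"

text \<open>The cube I^n, as functions nat \<Rightarrow> real with coordinates 0..n-1 (coordinate number
  m+1 is stored at index m), all other coordinates 0.\<close>
definition cube :: "nat \<Rightarrow> (nat \<Rightarrow> real) set" where
  "cube n = {t. (\<forall>i<n. 0 \<le> t i \<and> t i \<le> 1) \<and> (\<forall>i\<ge>n. t i = 0)}"

definition cube_top :: "nat \<Rightarrow> (nat \<Rightarrow> real) topology" where
  "cube_top n = subtopology euclidean (cube n)"

text \<open>Elementary face map delta^e_i : I^(n-1) \<rightarrow> I^n inserting the constant e at
  (1-based) position i.\<close>
definition cube_face :: "nat \<Rightarrow> bool \<Rightarrow> (nat \<Rightarrow> real) \<Rightarrow> (nat \<Rightarrow> real)" where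
  "cube_face i e t = (\<lambda>m. if m < i - 1 then t m else if m = i - 1 then (if e then 1 else 0) else t (m - 1))"

definition cdisj :: "(nat \<Rightarrow> 'a set) \<Rightarrow> ((nat \<times> 'a) \<times> (nat \<Rightarrow> real)) topology" where
  "cdisj Cs = sum_topology (\<lambda>(n, x). cube_top n) (Sigma UNIV Cs)"

text \<open>Generating identifications (d^e_i x, t) ~ (x, delta^e_i t); these generate the same
  equivalence relation as (mu^* x, t) ~ (x, mu t) for all face maps mu.\<close>
definition cgen :: "(nat \<Rightarrow> 'a set) \<Rightarrow> (nat \<Rightarrow> nat \<Rightarrow> bool \<Rightarrow> 'a \<Rightarrow> 'a) \<Rightarrow>
    (((nat \<times> 'a) \<times> (nat \<Rightarrow> real)) \<times> ((nat \<times> 'a) \<times> (nat \<Rightarrow> real))) set" where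
  "cgen Cs d = {(((n - 1, d n i e x), t), ((n, x), cube_face i e t)) | n i e x t.
                  1 \<le> i \<and> i \<le> n \<and> x \<in> Cs n \<and> t \<in> cube (n - 1)}"

definition crel :: "(nat \<Rightarrow> 'a set) \<Rightarrow> (nat \<Rightarrow> nat \<Rightarrow> bool \<Rightarrow> 'a \<Rightarrow> 'a) \<Rightarrow>
    (((nat \<times> 'a) \<times> (nat \<Rightarrow> real)) \<times> ((nat \<times> 'a) \<times> (nat \<Rightarrow> real))) set" where
  "crel Cs d = (cgen Cs d \<union> (cgen Cs d)\<inverse>)\<^sup>* \<inter> (topspace (cdisj Cs) \<times> topspace (cdisj Cs))"

definition quotient_top :: "'a topology \<Rightarrow> ('a \<times> 'a) set \<Rightarrow> 'a set topology" where
  "quotient_top X R = topology (\<lambda>U. U \<subseteq> topspace X // R \<and> openin X (\<Union>U))"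

definition realisation :: "(nat \<Rightarrow> 'a set) \<Rightarrow> (nat \<Rightarrow> nat \<Rightarrow> bool \<Rightarrow> 'a \<Rightarrow> 'a) \<Rightarrow>
    ((nat \<times> 'a) \<times> (nat \<Rightarrow> real)) set topology" where
  "realisation Cs d = quotient_top (cdisj Cs) (crel Cs d)"

definition liftmap :: "('b \<times> 'b) set \<Rightarrow> ('a \<Rightarrow> 'b) \<Rightarrow> 'a set \<Rightarrow> 'b set" where
  "liftmap R g X = R `` (g ` X)"

definition realmap :: "(nat \<Rightarrow> 'b set) \<Rightarrow> (nat \<Rightarrow> nat \<Rightarrow> bool \<Rightarrow> 'b \<Rightarrow> 'b) \<Rightarrow> (nat \<Rightarrow> 'a \<Rightarrow> 'b) \<Rightarrow>
    ((nat \<times> 'a) \<times> (nat \<Rightarrow> real)) set \<Rightarrow> ((nat \<times> 'b) \<times> (nat \<Rightarrow> real)) set" where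
  "realmap Ds d' f = liftmap (crel Ds d') (\<lambda>((n, x), t). ((n, f n x), t))"

text \<open>A projection lambda in P^(n+k)_k, (x_1..x_(n+k)) \<mapsto> (x_(i_1),..,x_(i_k)),
  is represented by the set S = {i_1,..,i_k} \<subseteq> {1..n+k}. For the elementary face
  mu = delta^e_j : I^(k-1) \<rightarrow> I^k one has mu_lambda = delta^e_(i_j) and mu^#(lambda) the
  projection onto S - {i_j} renumbered.\<close>
definition jcells :: "nat \<Rightarrow> (nat \<Rightarrow> 'a set) \<Rightarrow> nat \<Rightarrow> ('a \<times> nat set) set" where
  "jcells n Cs k = {(x, S). x \<in> Cs (n + k) \<and> S \<subseteq> {1..n + k} \<and> card S = k}"

definition jface :: "nat \<Rightarrow> (nat \<Rightarrow> nat \<Rightarrow> bool \<Rightarrow> 'a \<Rightarrow> 'a) \<Rightarrow>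
    nat \<Rightarrow> nat \<Rightarrow> bool \<Rightarrow> ('a \<times> nat set) \<Rightarrow> ('a \<times> nat set)" where
  "jface n d k j e xS = (case xS of (x, S) \<Rightarrow>
     (let s = sorted_list_of_set S ! (j - 1) in
       (d (n + k) s e x, (\<lambda>i. if i < s then i else i - 1) ` (S - {s}))))"

text \<open>The section s_lambda : I^k \<rightarrow> I^(n+k) inserting 1/2 in the collapsed coordinates.\<close>
definition jsect :: "nat set \<Rightarrow> nat \<Rightarrow> (nat \<Rightarrow> real) \<Rightarrow> (nat \<Rightarrow> real)" where
  "jsect S m t = (\<lambda>p. if p < m then (if Suc p \<in> S then t (card {q \<in> S. q \<le> p}) else 1 / 2) else 0)"

definition jproj :: "nat \<Rightarrow> (nat \<Rightarrow> 'a set) \<Rightarrow> (nat \<Rightarrow> nat \<Rightarrow> bool \<Rightarrow> 'a \<Rightarrow> 'a) \<Rightarrow>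
    ((nat \<times> ('a \<times> nat set)) \<times> (nat \<Rightarrow> real)) set \<Rightarrow> ((nat \<times> 'a) \<times> (nat \<Rightarrow> real)) set" where
  "jproj n Cs d = liftmap (crel Cs d) (\<lambda>((k, (x, S)), t). ((n + k, x), jsect S (n + k) t))"

definition jmap :: "nat \<Rightarrow> (nat \<Rightarrow> 'b set) \<Rightarrow> (nat \<Rightarrow> nat \<Rightarrow> bool \<Rightarrow> 'b \<Rightarrow> 'b) \<Rightarrow> (nat \<Rightarrow> 'a \<Rightarrow> 'b) \<Rightarrow>
    ((nat \<times> ('a \<times> nat set)) \<times> (nat \<Rightarrow> real)) set \<Rightarrow> ((nat \<times> ('b \<times> nat set)) \<times> (nat \<Rightarrow> real)) set" where
  "jmap n Ds d' f = liftmap (crel (jcells n Ds) (jface n d'))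
      (\<lambda>((k, (x, S)), t). ((k, (f (n + k) x, S)), t))"

end

theory Submission
  imports Defs
begin

text \<open>Every point of a realisation has a unique representative \<open>(c, u)\<close> with \<open>u\<close> in the
  open cube: moving a point into the smallest face containing it gives a normal form that is a
  complete invariant of the identifications. Both \<open>p\<^sub>n\<close> and \<open>|J\<^sup>n(f)|\<close> send such interior
  representatives to interior representatives, and \<open>((c, \<lambda>), t)\<close> is recovered from
  \<open>(c, s\<^sub>\<lambda> t)\<close> and \<open>((f c, \<lambda>), t)\<close>; so the comparison map \<open>g\<close> into the pull-back is a
  continuous bijection. Its first component \<open>p\<^sub>n\<close> is a closed map with finite fibres, hence
  proper, and realisations are Hausdorff; therefore \<open>g\<close> is proper, hence closed, hence a
  homeomorphism.\<close>

section \<open>Iterated face maps of cubes\<close>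

text \<open>A face pattern \<open>\<beta>\<close> describes an iterated face map \<open>\<mu>\<close>: \<open>\<beta> p = Some e\<close> means that
  coordinate \<open>p + 1\<close> (stored at index \<open>p\<close>) is the constant \<open>e\<close>, \<open>\<beta> p = None\<close> that it is free.
  On the first \<open>m\<close> coordinates, \<open>face_cell d \<beta> m N x\<close> is \<open>\<mu>\<^sup>* x\<close>, \<open>face_point \<beta> m w\<close>
  is \<open>\<mu> w\<close>, and \<open>drop_fixed \<beta> m\<close> deletes the fixed coordinates again.\<close>

type_synonym face_pattern = "nat \<Rightarrow> bool option"

lemma cube_face_apply:
  "cube_face i e t m = (if m < i - 1 then t m else if m = i - 1 then of_bool e else t (m - 1))"
  by (simp add: cube_face_def)

lemma cube_face_in_cube: "1 \<le> i \<Longrightarrow> i \<le> N \<Longrightarrow> t \<in> cube (N - 1) \<Longrightarrow> cube_face i e t \<in> cube N"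
  unfolding cube_def cube_face_def by auto

fun face_cell :: "(nat \<Rightarrow> nat \<Rightarrow> bool \<Rightarrow> 'a \<Rightarrow> 'a) \<Rightarrow> face_pattern \<Rightarrow> nat \<Rightarrow> nat \<Rightarrow> 'a \<Rightarrow> 'a" where
  "face_cell d \<beta> 0 N x = x"
| "face_cell d \<beta> (Suc m) N x = (case \<beta> m of
     None \<Rightarrow> face_cell d \<beta> m N x
   | Some e \<Rightarrow> face_cell d \<beta> m (N - 1) (d N (Suc m) e x))"

fun face_point :: "face_pattern \<Rightarrow> nat \<Rightarrow> (nat \<Rightarrow> real) \<Rightarrow> (nat \<Rightarrow> real)" where
  "face_point \<beta> 0 w = w"
| "face_point \<beta> (Suc m) w = (case \<beta> m of
     None \<Rightarrow> face_point \<beta> m w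
   | Some e \<Rightarrow> cube_face (Suc m) e (face_point \<beta> m w))"

definition drop_coord :: "nat \<Rightarrow> (nat \<Rightarrow> 'b) \<Rightarrow> (nat \<Rightarrow> 'b)" where
  "drop_coord m u = (\<lambda>p. if p < m then u p else u (Suc p))"

fun drop_fixed :: "face_pattern \<Rightarrow> nat \<Rightarrow> (nat \<Rightarrow> real) \<Rightarrow> (nat \<Rightarrow> real)" where
  "drop_fixed \<beta> 0 u = u"
| "drop_fixed \<beta> (Suc m) u = (case \<beta> m of
     None \<Rightarrow> drop_fixed \<beta> m u
   | Some e \<Rightarrow> drop_fixed \<beta> m (drop_coord m u))"

fun fixed_count :: "face_pattern \<Rightarrow> nat \<Rightarrow> nat" where
  "fixed_count \<beta> 0 = 0"
| "fixed_count \<beta> (Suc m) = (case \<beta> m of None \<Rightarrow> fixed_count \<beta> m | Some e \<Rightarrow> Suc (fixed_count \<beta> m))"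

definition pattern_insert :: "(nat \<Rightarrow> 'b option) \<Rightarrow> nat \<Rightarrow> 'b \<Rightarrow> (nat \<Rightarrow> 'b option)" where
  "pattern_insert \<beta> i e = (\<lambda>p. if p < i then \<beta> p else if p = i then Some e else \<beta> (p - 1))"

definition boundary_pattern :: "(nat \<Rightarrow> real) \<Rightarrow> nat \<Rightarrow> face_pattern" where
  "boundary_pattern u M = (\<lambda>p. if p < M \<and> u p \<in> {0, 1} then Some (u p = 1) else None)"

lemma fixed_count_le: "fixed_count \<beta> m \<le> m"
  by (induction m) (auto split: option.splits)

lemma fixed_count_le_add: "m \<le> N \<Longrightarrow> fixed_count \<beta> N \<le> fixed_count \<beta> m + (N - m)"
proof (induction N)
  case (Suc N)
  then show ?case
    by (cases "m = Suc N") (auto split: option.splits)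
qed simp

lemma face_cell_cong: "(\<And>p. p < m \<Longrightarrow> \<beta> p = \<beta>' p) \<Longrightarrow> face_cell d \<beta> m N x = face_cell d \<beta>' m N x"
  by (induction m arbitrary: N x) (auto split: option.splits)

lemma face_point_cong: "(\<And>p. p < m \<Longrightarrow> \<beta> p = \<beta>' p) \<Longrightarrow> face_point \<beta> m w = face_point \<beta>' m w"
  by (induction m) (auto split: option.splits)

lemma drop_fixed_cong: "(\<And>p. p < m \<Longrightarrow> \<beta> p = \<beta>' p) \<Longrightarrow> drop_fixed \<beta> m u = drop_fixed \<beta>' m u"
  by (induction m arbitrary: u) (auto split: option.splits)

lemma fixed_count_cong: "(\<And>p. p < m \<Longrightarrow> \<beta> p = \<beta>' p) \<Longrightarrow> fixed_count \<beta> m = fixed_count \<beta>' m"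
  by (induction m) (auto split: option.splits)

lemma free_pattern:
  assumes "\<And>p. p < m \<Longrightarrow> \<beta> p = None"
  shows "face_cell d \<beta> m N x = x" "drop_fixed \<beta> m u = u" "fixed_count \<beta> m = 0" "face_point \<beta> m w = w"
  using assms by (induction m arbitrary: N x u) auto

lemma face_point_in_cube:
  "w \<in> cube K \<Longrightarrow> m \<le> K + fixed_count \<beta> m \<Longrightarrow> face_point \<beta> m w \<in> cube (K + fixed_count \<beta> m)"
proof (induction m)
  case (Suc m)
  then show ?case
    by (cases "\<beta> m")
      (auto intro!: cube_face_in_cube[where N = "Suc (K + fixed_count \<beta> m)", simplified])
qed simp

lemma face_point_apply:
  "face_point \<beta> m w p =
    (if p < m then (case \<beta> p of Some e \<Rightarrow> of_bool e | None \<Rightarrow> w (p - fixed_count \<beta> p))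
     else w (p - fixed_count \<beta> m))"
proof (induction m arbitrary: p)
  case (Suc m)
  show ?case
  proof (cases "\<beta> m")
    case None
    then show ?thesis using Suc[of p] by (auto simp: less_Suc_eq)
  next
    case (Some e)
    then show ?thesis using Suc[of p] Suc[of "p - 1"] fixed_count_le[of \<beta> m]
      by (auto simp: cube_face_apply less_Suc_eq)
  qed
qed simp

text \<open>The free coordinates \<open>p < m\<close> are numbered by their rank \<open>p - fixed_count \<beta> p\<close>.\<close>

lemma free_rank_surj:
  "j < m - fixed_count \<beta> m \<Longrightarrow> \<exists>p<m. \<beta> p = None \<and> p - fixed_count \<beta> p = j"
proof (induction m)
  case (Suc m)
  show ?case
  proof (cases "\<beta> m")
    case None
    show ?thesis
    proof (cases "j < m - fixed_count \<beta> m")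
      case True
      with Suc None show ?thesis by (auto intro: less_SucI)
    next
      case False
      with Suc.prems None fixed_count_le[of \<beta> m] show ?thesis
        by (intro exI[of _ m]) auto
    qed
  next
    case (Some e)
    with Suc show ?thesis using fixed_count_le[of \<beta> m] by (auto intro: less_SucI)
  qed
qed simp

lemma free_rank_less:
  assumes "p < m" "\<beta> p = None"
  shows "p - fixed_count \<beta> p < m - fixed_count \<beta> m"
proof -
  have "fixed_count \<beta> m \<le> fixed_count \<beta> (Suc p) + (m - Suc p)"
    using assms by (intro fixed_count_le_add) auto
  then show ?thesis using assms fixed_count_le[of \<beta> p] by simp
qed

lemma face_point_drop_fixed:
  "(\<And>p e. p < m \<Longrightarrow> \<beta> p = Some e \<Longrightarrow> u p = of_bool e) \<Longrightarrow> face_point \<beta> m (drop_fixed \<beta> m u) = u"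
proof (induction m arbitrary: u)
  case (Suc m)
  show ?case
  proof (cases "\<beta> m")
    case (Some e)
    have "face_point \<beta> m (drop_fixed \<beta> m (drop_coord m u)) = drop_coord m u"
      using Suc.prems by (intro Suc.IH) (auto simp: drop_coord_def)
    moreover have "cube_face (Suc m) e (drop_coord m u) = u"
      using Suc.prems[of m e] Some by (auto simp: cube_face_apply drop_coord_def fun_eq_iff)
    ultimately show ?thesis using Some by simp
  qed (use Suc in auto)
qed simp

lemma drop_coord_in_cube: "u \<in> cube K \<Longrightarrow> m < K \<Longrightarrow> drop_coord m u \<in> cube (K - 1)"
  unfolding cube_def drop_coord_def by auto

lemma drop_fixed_in_cube: "u \<in> cube K \<Longrightarrow> m \<le> K \<Longrightarrow> drop_fixed \<beta> m u \<in> cube (K - fixed_count \<beta> m)"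
proof (induction m arbitrary: u K)
  case (Suc m)
  show ?case
  proof (cases "\<beta> m")
    case (Some e)
    have "drop_fixed \<beta> m (drop_coord m u) \<in> cube (K - 1 - fixed_count \<beta> m)"
      using Suc by (intro Suc.IH drop_coord_in_cube) auto
    then show ?thesis using Some by simp
  qed (use Suc in auto)
qed simp

lemma drop_fixed_apply_high: "m \<le> fixed_count \<beta> m + j \<Longrightarrow> drop_fixed \<beta> m u j = u (j + fixed_count \<beta> m)"
  by (induction m arbitrary: u j) (auto simp: drop_coord_def split: option.splits)

lemma drop_fixed_apply_free:
  "j < m - fixed_count \<beta> m \<Longrightarrow> \<exists>p<m. \<beta> p = None \<and> drop_fixed \<beta> m u j = u p"
proof (induction m arbitrary: u j)
  case (Suc m)
  show ?case
  proof (cases "\<beta> m")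
    case None
    show ?thesis
    proof (cases "j < m - fixed_count \<beta> m")
      case True
      then obtain p where "p < m" "\<beta> p = None" "drop_fixed \<beta> m u j = u p" using Suc.IH by blast
      then show ?thesis using None by (intro exI[of _ p]) auto
    next
      case False
      then have "drop_fixed \<beta> m u j = u (j + fixed_count \<beta> m)" by (intro drop_fixed_apply_high) auto
      moreover have "j + fixed_count \<beta> m = m" using False Suc.prems None fixed_count_le[of \<beta> m] by auto
      ultimately show ?thesis using None by (intro exI[of _ m]) auto
    qed
  next
    case (Some e)
    then obtain p where "p < m" "\<beta> p = None" "drop_fixed \<beta> m (drop_coord m u) j = drop_coord m u p"
      using Suc.IH[of j "drop_coord m u"] Suc.prems by auto
    then show ?thesis using Some by (intro exI[of _ p]) (auto simp: drop_coord_def)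
  qed
qed simp

lemma fixed_count_insert:
  "i \<le> m \<Longrightarrow> fixed_count (pattern_insert \<beta> i e) (Suc m) = Suc (fixed_count \<beta> m)"
proof (induction m)
  case (Suc m)
  show ?case
  proof (cases "i = Suc m")
    case True
    then have "fixed_count (pattern_insert \<beta> i e) (Suc m) = fixed_count \<beta> (Suc m)"
      by (intro fixed_count_cong) (auto simp: pattern_insert_def)
    then show ?thesis using True by (simp add: pattern_insert_def)
  next
    case False
    with Suc show ?thesis by (auto simp: pattern_insert_def split: option.splits)
  qed
qed (simp add: pattern_insert_def)

lemma face_point_insert:
  "i \<le> m \<Longrightarrow> face_point (pattern_insert \<beta> i e) (Suc m) w = cube_face (Suc i) e (face_point \<beta> m w)"
proof (induction m)
  case (Suc m)
  show ?case
  proof (cases "i = Suc m")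
    case True
    then have "face_point (pattern_insert \<beta> i e) (Suc m) w = face_point \<beta> (Suc m) w"
      by (intro face_point_cong) (auto simp: pattern_insert_def)
    then show ?thesis using True by (simp add: pattern_insert_def)
  next
    case False
    with Suc have "i \<le> m" by auto
    then show ?thesis
    proof (cases "\<beta> m")
      case (Some e')
      have "pattern_insert \<beta> i e (Suc m) = Some e'" using \<open>i \<le> m\<close> Some by (simp add: pattern_insert_def)
      then show ?thesis using Suc.IH \<open>i \<le> m\<close> Some by (auto simp: cube_face_apply fun_eq_iff)
    qed (use Suc.IH \<open>i \<le> m\<close> in \<open>simp add: pattern_insert_def\<close>)
  qed
qed (simp add: pattern_insert_def)

lemma drop_coord_commute: "i \<le> m \<Longrightarrow> drop_coord i (drop_coord (Suc m) u) = drop_coord m (drop_coord i u)"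
  by (auto simp: drop_coord_def)

lemma drop_fixed_insert:
  "i \<le> m \<Longrightarrow> drop_fixed (pattern_insert \<beta> i e) (Suc m) u = drop_fixed \<beta> m (drop_coord i u)"
proof (induction m arbitrary: u)
  case (Suc m)
  show ?case
  proof (cases "i = Suc m")
    case True
    then have "drop_fixed (pattern_insert \<beta> i e) (Suc m) = drop_fixed \<beta> (Suc m)"
      by (intro ext drop_fixed_cong) (auto simp: pattern_insert_def)
    then show ?thesis using True by (simp add: pattern_insert_def)
  next
    case False
    with Suc show ?thesis
      by (cases "\<beta> m") (auto simp: pattern_insert_def drop_coord_commute)
  qed
qed (simp add: pattern_insert_def)

lemma drop_coord_cube_face: "drop_coord i (cube_face (Suc i) e t) = t"
  by (auto simp: drop_coord_def cube_face_def)

lemma boundary_pattern_cube_face: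
  "t \<in> cube (N - 1) \<Longrightarrow> 1 \<le> i \<Longrightarrow> i \<le> N \<Longrightarrow>
   boundary_pattern (cube_face i e t) N = pattern_insert (boundary_pattern t (N - 1)) (i - 1) e"
  unfolding boundary_pattern_def pattern_insert_def cube_face_def cube_def by (auto simp: fun_eq_iff)

section \<open>Box sets and their realisations\<close>

type_synonym 'a cell_point = "(nat \<times> 'a) \<times> (nat \<Rightarrow> real)"

definition interior_point :: "'a cell_point \<Rightarrow> bool" where
  "interior_point P \<longleftrightarrow> (case P of ((M, x), u) \<Rightarrow> \<forall>p<M. 0 < u p \<and> u p < 1)"

lemma topspace_cube_top [simp]: "topspace (cube_top n) = cube n"
  by (simp add: cube_top_def)

lemma topspace_cdisj: "topspace (cdisj Cs) = {((m, x), t). x \<in> Cs m \<and> t \<in> cube m}"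
  by (auto simp: cdisj_def)

lemma openin_cdisj_iff:
  "openin (cdisj Cs) S \<longleftrightarrow>
    S \<subseteq> topspace (cdisj Cs) \<and> (\<forall>m. \<forall>x\<in>Cs m. openin (cube_top m) {t. ((m, x), t) \<in> S})"
  by (auto simp: cdisj_def openin_sum_topology)

lemma closedin_cdisj_iff:
  "closedin (cdisj Cs) S \<longleftrightarrow>
    S \<subseteq> topspace (cdisj Cs) \<and> (\<forall>m. \<forall>x\<in>Cs m. closedin (cube_top m) {t. ((m, x), t) \<in> S})"
  by (auto simp: cdisj_def closedin_sum_topology)

locale box_set =
  fixes Cs :: "nat \<Rightarrow> 'a set" and d :: "nat \<Rightarrow> nat \<Rightarrow> bool \<Rightarrow> 'a \<Rightarrow> 'a"
  assumes is_cset: "is_cset Cs d"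
begin

lemma face_mem: "1 \<le> i \<Longrightarrow> i \<le> n \<Longrightarrow> x \<in> Cs n \<Longrightarrow> d n i e x \<in> Cs (n - 1)"
  using is_cset unfolding is_cset_def by blast

lemma face_comm:
  "1 \<le> i \<Longrightarrow> i < j \<Longrightarrow> j \<le> n \<Longrightarrow> x \<in> Cs n \<Longrightarrow>
    d (n - 1) (j - 1) h (d n i e x) = d (n - 1) i e (d n j h x)"
  using is_cset unfolding is_cset_def by blast

abbreviation points :: "'a cell_point set" where
  "points \<equiv> topspace (cdisj Cs)"

lemma points_iff: "((m, x), t) \<in> points \<longleftrightarrow> x \<in> Cs m \<and> t \<in> cube m"
  by (simp add: topspace_cdisj)

lemma face_cell_mem: "m \<le> N \<Longrightarrow> x \<in> Cs N \<Longrightarrow> face_cell d \<beta> m N x \<in> Cs (N - fixed_count \<beta> m)"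
proof (induction m arbitrary: N x)
  case (Suc m)
  show ?case
  proof (cases "\<beta> m")
    case (Some e)
    have "d N (Suc m) e x \<in> Cs (N - 1)" using Suc.prems by (intro face_mem) auto
    then have "face_cell d \<beta> m (N - 1) (d N (Suc m) e x) \<in> Cs (N - 1 - fixed_count \<beta> m)"
      using Suc by (intro Suc.IH) auto
    then show ?thesis using Some by simp
  qed (use Suc in auto)
qed simp

lemma face_cell_insert:
  "i \<le> m \<Longrightarrow> m \<le> N \<Longrightarrow> x \<in> Cs (Suc N) \<Longrightarrow>
   face_cell d (pattern_insert \<beta> i e) (Suc m) (Suc N) x = face_cell d \<beta> m N (d (Suc N) (Suc i) e x)"
proof (induction m arbitrary: N x)
  case (Suc m)
  show ?case
  proof (cases "i = Suc m")
    case True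
    then have "face_cell d (pattern_insert \<beta> i e) (Suc m) = face_cell d \<beta> (Suc m)"
      by (intro ext face_cell_cong) (auto simp: pattern_insert_def)
    then show ?thesis using True by (simp add: pattern_insert_def)
  next
    case False
    with Suc have im: "i \<le> m" by auto
    show ?thesis
    proof (cases "\<beta> m")
      case (Some e')
      have ins: "pattern_insert \<beta> i e (Suc m) = Some e'" using im Some by (simp add: pattern_insert_def)
      obtain N' where N': "N = Suc N'" using Suc.prems by (cases N) auto
      have x': "d (Suc N) (Suc (Suc m)) e' x \<in> Cs N"
        using Suc.prems face_mem[of "Suc (Suc m)" "Suc N" x e'] by simp
      have "face_cell d (pattern_insert \<beta> i e) (Suc (Suc m)) (Suc N) x
          = face_cell d (pattern_insert \<beta> i e) (Suc m) N (d (Suc N) (Suc (Suc m)) e' x)"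
        using ins by simp
      also have "\<dots> = face_cell d \<beta> m N' (d N (Suc i) e (d (Suc N) (Suc (Suc m)) e' x))"
        using Suc.IH[of N' "d (Suc N) (Suc (Suc m)) e' x"] im Suc.prems x' N' by simp
      also have "d N (Suc i) e (d (Suc N) (Suc (Suc m)) e' x) = d N (Suc m) e' (d (Suc N) (Suc i) e x)"
        using face_comm[of "Suc i" "Suc (Suc m)" "Suc N" x e' e] im Suc.prems by simp
      finally show ?thesis using Some N' by simp
    qed (use Suc im in \<open>simp add: pattern_insert_def\<close>)
  qed
qed (simp add: pattern_insert_def)

abbreviation gen_equiv :: "('a cell_point \<times> 'a cell_point) set" where
  "gen_equiv \<equiv> (cgen Cs d \<union> (cgen Cs d)\<inverse>)\<^sup>*"

lemma gen_equiv_sym: "(P, Q) \<in> gen_equiv \<Longrightarrow> (Q, P) \<in> gen_equiv"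
  by (metis converse_Un converse_converse rtrancl_converseI sup_commute)

lemma gen_equiv_face:
  "1 \<le> i \<Longrightarrow> i \<le> N \<Longrightarrow> x \<in> Cs N \<Longrightarrow> t \<in> cube (N - 1) \<Longrightarrow>
   (((N - 1, d N i e x), t), ((N, x), cube_face i e t)) \<in> gen_equiv"
  unfolding cgen_def by blast

lemma gen_equiv_face_pattern:
  "x \<in> Cs N \<Longrightarrow> m \<le> N \<Longrightarrow> w \<in> cube (N - fixed_count \<beta> m) \<Longrightarrow>
   (((N - fixed_count \<beta> m, face_cell d \<beta> m N x), w), ((N, x), face_point \<beta> m w)) \<in> gen_equiv"
proof (induction m arbitrary: N x)
  case (Suc m)
  show ?case
  proof (cases "\<beta> m")
    case (Some e)
    have x': "d N (Suc m) e x \<in> Cs (N - 1)" using Suc.prems by (intro face_mem) auto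
    have 1: "(((N - 1 - fixed_count \<beta> m, face_cell d \<beta> m (N - 1) (d N (Suc m) e x)), w),
              ((N - 1, d N (Suc m) e x), face_point \<beta> m w)) \<in> gen_equiv"
      using Suc Some x' by (intro Suc.IH) auto
    have "face_point \<beta> m w \<in> cube (N - 1 - fixed_count \<beta> m + fixed_count \<beta> m)"
      using Suc.prems Some fixed_count_le[of \<beta> m] by (intro face_point_in_cube) auto
    then have "face_point \<beta> m w \<in> cube (N - 1)" using fixed_count_le[of \<beta> m] Suc.prems by simp
    then have 2: "(((N - 1, d N (Suc m) e x), face_point \<beta> m w),
        ((N, x), cube_face (Suc m) e (face_point \<beta> m w))) \<in> gen_equiv"
      using Suc.prems by (intro gen_equiv_face) auto
    show ?thesis using rtrancl_trans[OF 1 2] Some by simp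
  qed (use Suc in auto)
qed simp

text \<open>The normal form moves a point to the smallest face containing it.\<close>

definition normal_form :: "'a cell_point \<Rightarrow> 'a cell_point" where
  "normal_form P = (case P of ((M, x), u) \<Rightarrow>
     ((M - fixed_count (boundary_pattern u M) M, face_cell d (boundary_pattern u M) M M x),
      drop_fixed (boundary_pattern u M) M u))"

lemma normal_form_points: "P \<in> points \<Longrightarrow> normal_form P \<in> points"
  by (auto simp: topspace_cdisj normal_form_def intro!: face_cell_mem drop_fixed_in_cube)

lemma normal_form_gen_equiv: "P \<in> points \<Longrightarrow> (normal_form P, P) \<in> gen_equiv"
proof -
  assume P: "P \<in> points"
  obtain M x u where P_eq: "P = ((M, x), u)" by (metis prod.collapse)
  have xu: "x \<in> Cs M" "u \<in> cube M" using P P_eq by (auto simp: topspace_cdisj)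
  let ?\<beta> = "boundary_pattern u M"
  have "face_point ?\<beta> M (drop_fixed ?\<beta> M u) = u"
    by (rule face_point_drop_fixed) (auto simp: boundary_pattern_def split: if_splits)
  moreover have "(((M - fixed_count ?\<beta> M, face_cell d ?\<beta> M M x), drop_fixed ?\<beta> M u),
      ((M, x), face_point ?\<beta> M (drop_fixed ?\<beta> M u))) \<in> gen_equiv"
    using xu by (intro gen_equiv_face_pattern drop_fixed_in_cube) auto
  ultimately show ?thesis by (simp add: P_eq normal_form_def)
qed

lemma normal_form_face:
  assumes "1 \<le> i" "i \<le> N" "x \<in> Cs N" "t \<in> cube (N - 1)"
  shows "normal_form ((N - 1, d N i e x), t) = normal_form ((N, x), cube_face i e t)"
proof -
  obtain N0 where N0: "N = Suc N0" using assms by (cases N) auto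
  define \<beta> where "\<beta> = boundary_pattern t N0"
  have i0: "i - 1 \<le> N0" using assms N0 by auto
  have "boundary_pattern (cube_face i e t) N = pattern_insert \<beta> (i - 1) e"
    using boundary_pattern_cube_face[OF assms(4,1,2)] N0 \<beta>_def by simp
  moreover have "fixed_count (pattern_insert \<beta> (i - 1) e) (Suc N0) = Suc (fixed_count \<beta> N0)"
    using i0 by (rule fixed_count_insert)
  moreover have "face_cell d (pattern_insert \<beta> (i - 1) e) (Suc N0) (Suc N0) x
      = face_cell d \<beta> N0 N0 (d (Suc N0) (Suc (i - 1)) e x)"
    using i0 assms N0 by (intro face_cell_insert) auto
  moreover have "drop_fixed (pattern_insert \<beta> (i - 1) e) (Suc N0) (cube_face i e t) = drop_fixed \<beta> N0 t"
    using drop_fixed_insert[OF i0] drop_coord_cube_face[of "i - 1" e t] assms by simp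
  ultimately show ?thesis using assms N0
    by (simp add: normal_form_def \<beta>_def del: face_cell.simps drop_fixed.simps fixed_count.simps)
qed

lemma normal_form_eq_if_gen_equiv: "(P, Q) \<in> gen_equiv \<Longrightarrow> normal_form P = normal_form Q"
proof (induction rule: rtrancl_induct)
  case (step y z)
  then show ?case using normal_form_face[simplified] by (auto simp: cgen_def)
qed simp

lemma gen_equiv_points: "(P, Q) \<in> gen_equiv \<Longrightarrow> P \<in> points \<Longrightarrow> Q \<in> points"
proof (induction rule: rtrancl_induct)
  case (step y z)
  then show ?case
    using face_mem[simplified] cube_face_in_cube[simplified] by (auto simp: cgen_def topspace_cdisj)
qed simp

lemma crel_iff: "(P, Q) \<in> crel Cs d \<longleftrightarrow> P \<in> points \<and> Q \<in> points \<and> normal_form P = normal_form Q"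
proof
  assume "(P, Q) \<in> crel Cs d"
  then show "P \<in> points \<and> Q \<in> points \<and> normal_form P = normal_form Q"
    by (auto simp: crel_def intro: normal_form_eq_if_gen_equiv)
next
  assume a: "P \<in> points \<and> Q \<in> points \<and> normal_form P = normal_form Q"
  then have "(P, normal_form P) \<in> gen_equiv" "(normal_form Q, Q) \<in> gen_equiv"
    using normal_form_gen_equiv gen_equiv_sym by blast+
  then have "(P, Q) \<in> gen_equiv" using a by (metis rtrancl_trans)
  then show "(P, Q) \<in> crel Cs d" using a by (simp add: crel_def)
qed

lemma interior_point_normal_form: "P \<in> points \<Longrightarrow> interior_point (normal_form P)"
proof -
  assume P: "P \<in> points"
  obtain M x u where P_eq: "P = ((M, x), u)" by (metis prod.collapse)
  have u: "u \<in> cube M" using P P_eq by (auto simp: topspace_cdisj)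
  let ?\<beta> = "boundary_pattern u M"
  have "0 < drop_fixed ?\<beta> M u j \<and> drop_fixed ?\<beta> M u j < 1" if j: "j < M - fixed_count ?\<beta> M" for j
  proof -
    obtain p where "p < M" "?\<beta> p = None" "drop_fixed ?\<beta> M u j = u p"
      using drop_fixed_apply_free[OF j] by blast
    then show ?thesis using u by (auto simp: boundary_pattern_def cube_def less_le)
  qed
  then show ?thesis by (simp add: P_eq normal_form_def interior_point_def)
qed

lemma normal_form_interior_point: "interior_point P \<Longrightarrow> normal_form P = P"
proof -
  assume P: "interior_point P"
  obtain M x u where P_eq: "P = ((M, x), u)" by (metis prod.collapse)
  have "\<And>p. p < M \<Longrightarrow> boundary_pattern u M p = None"
    using P P_eq by (auto simp: boundary_pattern_def interior_point_def)
  then show ?thesis using free_pattern[of M "boundary_pattern u M"] by (simp add: P_eq normal_form_def)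
qed

definition class_of :: "'a cell_point \<Rightarrow> 'a cell_point set" where
  "class_of P = crel Cs d `` {P}"

abbreviation classes :: "'a cell_point set set" where
  "classes \<equiv> points // crel Cs d"

lemma mem_class_of: "P \<in> points \<Longrightarrow> Q \<in> class_of P \<longleftrightarrow> Q \<in> points \<and> normal_form Q = normal_form P"
  by (auto simp: class_of_def crel_iff)

lemma class_of_self: "P \<in> points \<Longrightarrow> P \<in> class_of P"
  by (simp add: mem_class_of)

lemma class_of_eq_iff: "P \<in> points \<Longrightarrow> Q \<in> points \<Longrightarrow> class_of P = class_of Q \<longleftrightarrow> normal_form P = normal_form Q"
  by (metis class_of_self mem_class_of set_eq_iff)

lemma classes_eq: "classes = class_of ` points"
  by (auto simp: quotient_def class_of_def)

lemma class_of_subset: "P \<in> points \<Longrightarrow> class_of P \<subseteq> points"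
  by (auto simp: mem_class_of)

lemma Union_classes: "\<Union> classes = points"
  unfolding classes_eq using class_of_self class_of_subset by blast

lemma classes_eq_class_of: "A \<in> classes \<Longrightarrow> Q \<in> A \<Longrightarrow> A = class_of Q"
  by (auto simp: classes_eq class_of_eq_iff mem_class_of)

lemma classes_interior_point: "A \<in> classes \<Longrightarrow> \<exists>P. P \<in> points \<and> interior_point P \<and> A = class_of P"
proof -
  assume "A \<in> classes"
  then obtain P0 where "P0 \<in> points" "A = class_of P0" by (auto simp: classes_eq)
  then show ?thesis
    using normal_form_points interior_point_normal_form normal_form_interior_point class_of_eq_iff
    by (intro exI[of _ "normal_form P0"]) auto
qed

lemma class_of_inj:
  "P \<in> points \<Longrightarrow> Q \<in> points \<Longrightarrow> interior_point P \<Longrightarrow> interior_point Q \<Longrightarrow> class_of P = class_of Q \<Longrightarrow> P = Q"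
  using class_of_eq_iff normal_form_interior_point by metis

lemma istopology_realisation: "istopology (\<lambda>U. U \<subseteq> classes \<and> openin (cdisj Cs) (\<Union>U))"
  unfolding istopology_def
proof (intro conjI allI impI)
  fix S T assume S: "S \<subseteq> classes \<and> openin (cdisj Cs) (\<Union> S)" and T: "T \<subseteq> classes \<and> openin (cdisj Cs) (\<Union> T)"
  then show "S \<inter> T \<subseteq> classes" by auto
  have "\<Union>(S \<inter> T) = \<Union>S \<inter> \<Union>T"
    using S T by (auto dest: classes_eq_class_of)
  then show "openin (cdisj Cs) (\<Union> (S \<inter> T))" using S T by auto
next
  fix K assume "\<forall>S\<in>K. S \<subseteq> classes \<and> openin (cdisj Cs) (\<Union> S)"
  moreover have "\<Union>(\<Union>K) = \<Union>(Union ` K)" by auto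
  ultimately show "\<Union> K \<subseteq> classes" "openin (cdisj Cs) (\<Union> (\<Union> K))" by auto
qed

lemma openin_realisation: "openin (realisation Cs d) U \<longleftrightarrow> U \<subseteq> classes \<and> openin (cdisj Cs) (\<Union>U)"
  unfolding realisation_def quotient_top_def using istopology_realisation by simp

lemma topspace_realisation: "topspace (realisation Cs d) = classes"
  by (metis (no_types, lifting) Union_classes openin_realisation openin_subset openin_topspace
      openin_topspace_empty subset_antisym subset_refl)

lemma points_class_of_mem: "U \<subseteq> classes \<Longrightarrow> {P \<in> points. class_of P \<in> U} = \<Union>U"
  using class_of_self classes_eq_class_of Union_classes by blast

lemma quotient_map_class_of: "quotient_map (cdisj Cs) (realisation Cs d) class_of"
  unfolding quotient_map_def
proof (intro conjI allI impI)
  show "class_of ` points = topspace (realisation Cs d)"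
    by (simp add: topspace_realisation classes_eq)
  fix U assume "U \<subseteq> topspace (realisation Cs d)"
  then have U: "U \<subseteq> classes" by (simp add: topspace_realisation)
  then show "openin (cdisj Cs) {P. P \<in> points \<and> class_of P \<in> U} = openin (realisation Cs d) U"
    by (simp add: openin_realisation U points_class_of_mem)
qed

lemma closedin_realisation_iff: "closedin (realisation Cs d) U \<longleftrightarrow> U \<subseteq> classes \<and> closedin (cdisj Cs) (\<Union>U)"
proof (cases "U \<subseteq> classes")
  case True
  from quotient_map_class_of
  have "\<forall>U \<subseteq> classes. closedin (cdisj Cs) {P \<in> points. class_of P \<in> U} = closedin (realisation Cs d) U"
    unfolding quotient_map_closedin topspace_realisation by blast
  then have "closedin (cdisj Cs) {P \<in> points. class_of P \<in> U} = closedin (realisation Cs d) U"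
    using True by blast
  then show ?thesis using True points_class_of_mem[OF True] by simp
next
  case False
  then show ?thesis using closedin_subset[of "realisation Cs d" U] by (auto simp: topspace_realisation)
qed

end

locale box_set_pair = C: box_set Cs d + D: box_set Ds d'
  for Cs :: "nat \<Rightarrow> 'a set" and d and Ds :: "nat \<Rightarrow> 'b set" and d'
begin

context
  fixes g :: "'a cell_point \<Rightarrow> 'b cell_point"
  assumes map_points: "\<And>P. P \<in> C.points \<Longrightarrow> g P \<in> D.points"
    and normal_form_map_cgen: "\<And>P Q. (P, Q) \<in> cgen Cs d \<Longrightarrow> D.normal_form (g P) = D.normal_form (g Q)"
begin

lemma normal_form_map_gen_equiv: "(P, Q) \<in> C.gen_equiv \<Longrightarrow> D.normal_form (g P) = D.normal_form (g Q)"
proof (induction rule: rtrancl_induct)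
  case (step y z)
  then show ?case using normal_form_map_cgen[of y z] normal_form_map_cgen[of z y] by auto
qed simp

lemma liftmap_class_of:
  assumes P: "P \<in> C.points"
  shows "liftmap (crel Ds d') g (C.class_of P) = D.class_of (g P)"
proof -
  have Q: "g Q \<in> D.points \<and> D.normal_form (g Q) = D.normal_form (g P)" if "Q \<in> C.class_of P" for Q
    using that normal_form_map_gen_equiv[of P Q] map_points by (auto simp: C.class_of_def crel_def)
  show ?thesis
  proof (intro set_eqI iffI)
    fix y assume "y \<in> liftmap (crel Ds d') g (C.class_of P)"
    then obtain Q where "Q \<in> C.class_of P" "(g Q, y) \<in> crel Ds d'" by (auto simp: liftmap_def)
    then show "y \<in> D.class_of (g P)" using Q P map_points by (simp add: D.mem_class_of D.crel_iff)
  next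
    fix y assume "y \<in> D.class_of (g P)"
    then show "y \<in> liftmap (crel Ds d') g (C.class_of P)"
      using C.class_of_self[OF P] by (auto simp: liftmap_def D.class_of_def)
  qed
qed

lemma continuous_map_liftmap:
  assumes "continuous_map (cdisj Cs) (cdisj Ds) g"
  shows "continuous_map (realisation Cs d) (realisation Ds d') (liftmap (crel Ds d') g)"
proof (rule continuous_compose_quotient_map[OF C.quotient_map_class_of])
  have "continuous_map (cdisj Cs) (realisation Ds d') (D.class_of \<circ> g)"
    using assms quotient_imp_continuous_map[OF D.quotient_map_class_of] by (rule continuous_map_compose)
  then show "continuous_map (cdisj Cs) (realisation Ds d') (liftmap (crel Ds d') g \<circ> C.class_of)"
    by (rule continuous_map_eq) (simp add: liftmap_class_of)
qed

end

end

section \<open>Realisations are Hausdorff\<close>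

definition eps_interior :: "nat \<Rightarrow> (nat \<Rightarrow> real) \<Rightarrow> real \<Rightarrow> bool" where
  "eps_interior k u \<epsilon> \<longleftrightarrow> 0 < \<epsilon> \<and> \<epsilon> \<le> 1/2 \<and> (\<forall>j<k. \<epsilon> \<le> u j \<and> \<epsilon> \<le> 1 - u j)"

lemma eps_interior_mono: "eps_interior k u \<delta> \<Longrightarrow> 0 < \<epsilon> \<Longrightarrow> \<epsilon> \<le> \<delta> \<Longrightarrow> eps_interior k u \<epsilon>"
  by (auto simp: eps_interior_def)

lemma eps_interior_exists:
  assumes "\<forall>p<k. 0 < u p \<and> u p < 1"
  shows "\<exists>\<delta>. eps_interior k u \<delta>"
proof -
  define F where "F = insert (1/2) (u ` {..<k} \<union> (\<lambda>j. 1 - u j) ` {..<k})"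
  have F: "finite F" "\<forall>x\<in>F. 0 < x" using assms by (auto simp: F_def)
  then have le: "Min F \<le> x" if "x \<in> F" for x
    using that by simp
  have "0 < Min F" using F by (simp add: F_def)
  moreover have "Min F \<le> 1/2" by (rule le) (simp add: F_def)
  moreover have "Min F \<le> u j \<and> Min F \<le> 1 - u j" if "j < k" for j
    using that by (auto simp: F_def intro!: le)
  ultimately have "eps_interior k u (Min F)" by (simp add: eps_interior_def)
  then show ?thesis ..
qed

lemma separating_eps_exists:
  assumes \<delta>1: "eps_interior k1 u1 \<delta>1" and \<delta>2: "eps_interior k2 u2 \<delta>2"
  obtains \<epsilon> where "eps_interior k1 u1 (2 * \<epsilon>)" "eps_interior k2 u2 (2 * \<epsilon>)"
    "\<And>j. j < k1 \<Longrightarrow> u1 j \<noteq> u2 j \<Longrightarrow> 2 * \<epsilon> \<le> \<bar>u1 j - u2 j\<bar>"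
proof -
  define G where "G = insert 1 {\<bar>u1 j - u2 j\<bar> | j. j < k1 \<and> u1 j \<noteq> u2 j}"
  define \<epsilon> where "\<epsilon> = min (min \<delta>1 \<delta>2) (Min G) / 2"
  have "finite G" "G \<noteq> {}" "\<forall>x\<in>G. 0 < x" by (auto simp: G_def)
  then have "0 < \<epsilon>" using \<delta>1 \<delta>2 by (simp add: \<epsilon>_def eps_interior_def)
  moreover have "2 * \<epsilon> \<le> \<delta>1" "2 * \<epsilon> \<le> \<delta>2" by (simp_all add: \<epsilon>_def)
  ultimately have "eps_interior k1 u1 (2 * \<epsilon>)" "eps_interior k2 u2 (2 * \<epsilon>)"
    using eps_interior_mono[OF \<delta>1, of "2 * \<epsilon>"] eps_interior_mono[OF \<delta>2, of "2 * \<epsilon>"] by auto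
  moreover have "2 * \<epsilon> \<le> \<bar>u1 j - u2 j\<bar>" if "j < k1" "u1 j \<noteq> u2 j" for j
  proof -
    have "\<bar>u1 j - u2 j\<bar> \<in> G" using that by (auto simp: G_def)
    then have "Min G \<le> \<bar>u1 j - u2 j\<bar>" using \<open>finite G\<close> by simp
    then show ?thesis by (simp add: \<epsilon>_def)
  qed
  ultimately show ?thesis using that by blast
qed

lemma face_point_eps_interior:
  assumes "eps_interior k u \<delta>" "m - fixed_count \<beta> m = k" "p < m" "\<beta> p = None"
  shows "\<delta> \<le> face_point \<beta> m u p \<and> \<delta> \<le> 1 - face_point \<beta> m u p"
  using assms free_rank_less[of p m \<beta>] by (simp add: face_point_apply eps_interior_def)

text \<open>Free coordinates of \<open>face_point \<beta> m u\<close> stay \<open>\<epsilon>\<close> away from the boundary,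
  so a coordinate \<open>\<epsilon>\<close>-close to \<open>0\<close> or \<open>1\<close> is fixed by \<open>\<beta>\<close>, to the same value.\<close>

lemma face_pattern_fixed_if_close:
  assumes "eps_interior k u \<epsilon>" "m - fixed_count \<beta> m = k" "p < m"
    and close: "\<bar>of_bool e - face_point \<beta> m u p\<bar> < \<epsilon>"
  shows "\<beta> p = Some e"
proof (cases "\<beta> p")
  case None
  then show ?thesis using close face_point_eps_interior[OF assms(1-3) None] by (cases e) auto
next
  case (Some e')
  then have "face_point \<beta> m u p = of_bool e'" using assms(3) by (simp add: face_point_apply)
  then show ?thesis using close assms(1) Some by (cases e; cases e') (auto simp: eps_interior_def)
qed

lemma face_pattern_unique:
  assumes u1: "eps_interior k1 u1 (2 * \<epsilon>)" "m - fixed_count \<beta>1 m = k1" "\<forall>p\<ge>m. \<beta>1 p = None"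
    and u2: "eps_interior k2 u2 (2 * \<epsilon>)" "m - fixed_count \<beta>2 m = k2" "\<forall>p\<ge>m. \<beta>2 p = None"
    and close: "\<forall>p<m. \<bar>face_point \<beta>1 m u1 p - face_point \<beta>2 m u2 p\<bar> < 2 * \<epsilon>"
  shows "\<beta>1 = \<beta>2"
proof
  fix p
  show "\<beta>1 p = \<beta>2 p"
  proof (cases "p < m")
    case True
    note close = close[rule_format, OF True]
    show ?thesis
    proof (cases "\<beta>2 p")
      case (Some e)
      then have "face_point \<beta>2 m u2 p = of_bool e" using True by (simp add: face_point_apply)
      then show ?thesis
        using face_pattern_fixed_if_close[OF u1(1,2) True] close Some by (simp add: abs_minus_commute)
    next
      case None
      show ?thesis
      proof (cases "\<beta>1 p")
        case (Some e)
        then have "face_point \<beta>1 m u1 p = of_bool e" using True by (simp add: face_point_apply)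
        then show ?thesis using face_pattern_fixed_if_close[OF u2(1,2) True] close Some by simp
      qed (use None in simp)
    qed
  qed (use u1 u2 in auto)
qed

context box_set
begin

text \<open>\<open>near_face k \<sigma> u \<epsilon> ((m, \<tau>), v)\<close> says that \<open>\<sigma> = \<mu>\<^sup>* \<tau>\<close> for a face map
  \<open>\<mu> : I\<^sup>k \<rightarrow> I\<^sup>m\<close> such that \<open>v\<close> is \<open>\<epsilon>\<close>-close to \<open>\<mu> u\<close> in every coordinate.\<close>

fun near_face :: "nat \<Rightarrow> 'a \<Rightarrow> (nat \<Rightarrow> real) \<Rightarrow> real \<Rightarrow> 'a cell_point \<Rightarrow> bool" where
  "near_face k \<sigma> u \<epsilon> ((m, \<tau>), v) \<longleftrightarrow>
    (\<exists>\<beta>. (\<forall>p\<ge>m. \<beta> p = None) \<and> m - fixed_count \<beta> m = k \<and> face_cell d \<beta> m m \<tau> = \<sigma> \<and>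
       (\<forall>p<m. \<bar>v p - face_point \<beta> m u p\<bar> < \<epsilon>))"

declare near_face.simps [simp del]

lemma near_face_cube_face:
  assumes "1 \<le> i" "i \<le> N" "x \<in> Cs N" "0 < \<epsilon>"
    and "near_face k \<sigma> u \<epsilon> ((N - 1, d N i e x), t)"
  shows "near_face k \<sigma> u \<epsilon> ((N, x), cube_face i e t)"
proof -
  obtain N0 where N0: "N = Suc N0" using assms by (cases N) auto
  obtain \<beta> where \<beta>: "\<forall>p\<ge>N0. \<beta> p = None" "N0 - fixed_count \<beta> N0 = k"
    "face_cell d \<beta> N0 N0 (d N i e x) = \<sigma>" "\<forall>p<N0. \<bar>t p - face_point \<beta> N0 u p\<bar> < \<epsilon>"
    using assms(5) N0 by (auto simp: near_face.simps)
  have i: "i - 1 \<le> N0" using assms N0 by auto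
  define \<beta>' where "\<beta>' = pattern_insert \<beta> (i - 1) e"
  have "fixed_count \<beta>' (Suc N0) = Suc (fixed_count \<beta> N0)"
    unfolding \<beta>'_def by (rule fixed_count_insert[OF i])
  moreover have "face_cell d \<beta>' (Suc N0) (Suc N0) x = face_cell d \<beta> N0 N0 (d (Suc N0) (Suc (i - 1)) e x)"
    unfolding \<beta>'_def using i assms N0 by (intro face_cell_insert) auto
  moreover have "face_point \<beta>' (Suc N0) u = cube_face (Suc (i - 1)) e (face_point \<beta> N0 u)"
    unfolding \<beta>'_def by (rule face_point_insert[OF i])
  moreover have "\<forall>p\<ge>Suc N0. \<beta>' p = None" using \<beta> i by (auto simp: \<beta>'_def pattern_insert_def)
  moreover have "\<bar>cube_face i e t p - cube_face i e (face_point \<beta> N0 u) p\<bar> < \<epsilon>" if "p < Suc N0" for p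
    using that \<beta>(4) assms(4) i by (auto simp: cube_face_apply)
  ultimately show ?thesis
    using \<beta> assms N0 unfolding near_face.simps
    by (auto simp del: face_cell.simps fixed_count.simps face_point.simps intro!: exI[of _ \<beta>'])
qed

lemma near_face_cube_face_rev:
  assumes "1 \<le> i" "i \<le> N" "x \<in> Cs N" and u: "eps_interior k u \<epsilon>"
    and "near_face k \<sigma> u \<epsilon> ((N, x), cube_face i e t)"
  shows "near_face k \<sigma> u \<epsilon> ((N - 1, d N i e x), t)"
proof -
  obtain N0 where N0: "N = Suc N0" using assms by (cases N) auto
  obtain \<beta>' where \<beta>': "\<forall>p\<ge>N. \<beta>' p = None" "N - fixed_count \<beta>' N = k" "face_cell d \<beta>' N N x = \<sigma>"
    "\<forall>p<N. \<bar>cube_face i e t p - face_point \<beta>' N u p\<bar> < \<epsilon>"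
    using assms(5) by (auto simp: near_face.simps)
  define q where "q = i - 1"
  have q: "q < N" "q \<le> N0" "Suc q = i" using assms N0 by (auto simp: q_def)
  have "\<bar>of_bool e - face_point \<beta>' N u q\<bar> < \<epsilon>"
    using \<beta>'(4) q by (auto simp: cube_face_apply q_def)
  then have "\<beta>' q = Some e" using face_pattern_fixed_if_close[OF u \<beta>'(2) q(1)] by blast
  define \<beta> where "\<beta> = (\<lambda>p. if p < q then \<beta>' p else \<beta>' (Suc p))"
  have \<beta>'_eq: "\<beta>' = pattern_insert \<beta> q e"
    using \<open>\<beta>' q = Some e\<close> by (auto simp: \<beta>_def pattern_insert_def fun_eq_iff)
  have "fixed_count \<beta>' (Suc N0) = Suc (fixed_count \<beta> N0)"
    unfolding \<beta>'_eq using q by (intro fixed_count_insert) auto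
  moreover have "face_cell d \<beta>' (Suc N0) (Suc N0) x = face_cell d \<beta> N0 N0 (d (Suc N0) (Suc q) e x)"
    unfolding \<beta>'_eq using q assms N0 by (intro face_cell_insert) auto
  moreover have fp: "face_point \<beta>' (Suc N0) u = cube_face i e (face_point \<beta> N0 u)"
    unfolding \<beta>'_eq using face_point_insert[of q N0 \<beta> e u] q by simp
  moreover have "\<forall>p\<ge>N0. \<beta> p = None" using \<beta>' q N0 by (auto simp: \<beta>_def)
  moreover have "\<bar>t p - face_point \<beta> N0 u p\<bar> < \<epsilon>" if "p < N0" for p
  proof -
    define r where "r = (if p < q then p else Suc p)"
    have "\<bar>cube_face i e t r - cube_face i e (face_point \<beta> N0 u) r\<bar> < \<epsilon>"
      using that \<beta>'(4) fp N0 by (auto simp: r_def)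
    then show ?thesis by (auto simp: r_def cube_face_apply q_def split: if_splits)
  qed
  ultimately show ?thesis
    using \<beta>' q N0 unfolding near_face.simps
    by (auto simp del: face_cell.simps fixed_count.simps face_point.simps intro!: exI[of _ \<beta>])
qed

lemma near_face_gen_equiv:
  assumes u: "eps_interior k u \<epsilon>"
  shows "(P, Q) \<in> gen_equiv \<Longrightarrow> near_face k \<sigma> u \<epsilon> P = near_face k \<sigma> u \<epsilon> Q"
proof (induction rule: rtrancl_induct)
  case (step y z)
  have "0 < \<epsilon>" using u by (simp add: eps_interior_def)
  then have "near_face k \<sigma> u \<epsilon> y = near_face k \<sigma> u \<epsilon> z"
    using step(2) near_face_cube_face near_face_cube_face_rev[OF _ _ _ u] by (auto simp: cgen_def)
  then show ?case using step by simp
qed simp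

definition nbhd :: "nat \<Rightarrow> 'a \<Rightarrow> (nat \<Rightarrow> real) \<Rightarrow> real \<Rightarrow> 'a cell_point set set" where
  "nbhd k \<sigma> u \<epsilon> = {X \<in> classes. \<exists>Q\<in>X. near_face k \<sigma> u \<epsilon> Q}"

lemma near_face_class_of:
  "eps_interior k u \<epsilon> \<Longrightarrow> Q \<in> class_of P \<Longrightarrow> near_face k \<sigma> u \<epsilon> Q = near_face k \<sigma> u \<epsilon> P"
  by (metis near_face_gen_equiv Image_singleton_iff class_of_def crel_def IntD1)

lemma points_class_of_nbhd:
  assumes "eps_interior k u \<epsilon>"
  shows "{Q. Q \<in> points \<and> class_of Q \<in> nbhd k \<sigma> u \<epsilon>} = {Q \<in> points. near_face k \<sigma> u \<epsilon> Q}"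
proof -
  have "class_of Q \<in> nbhd k \<sigma> u \<epsilon> \<longleftrightarrow> near_face k \<sigma> u \<epsilon> Q" if "Q \<in> points" for Q
    using near_face_class_of[OF assms] class_of_self[OF that] that unfolding nbhd_def classes_eq by blast
  then show ?thesis by blast
qed

lemma open_coordinate_box: "open {v :: nat \<Rightarrow> real. \<forall>p<m. \<bar>v p - c p\<bar> < \<epsilon>}"
proof -
  have "open {v. \<forall>p\<in>{..<m}. v (id p) \<in> ball (c p) \<epsilon>}"
    by (rule product_topology_basis') auto
  moreover have "{v. \<forall>p\<in>{..<m}. v (id p) \<in> ball (c p) \<epsilon>} = {v. \<forall>p<m. \<bar>v p - c p\<bar> < \<epsilon>}"
    by (auto simp: dist_real_def abs_minus_commute)
  ultimately show ?thesis by simp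
qed

lemma openin_near_face: "openin (cdisj Cs) {Q \<in> points. near_face k \<sigma> u \<epsilon> Q}"
  unfolding openin_cdisj_iff
proof (intro conjI allI ballI)
  fix m \<tau> assume "\<tau> \<in> Cs m"
  define Bs where "Bs = {\<beta>. (\<forall>p\<ge>m. \<beta> p = None) \<and> m - fixed_count \<beta> m = k \<and> face_cell d \<beta> m m \<tau> = \<sigma>}"
  have "{v. ((m, \<tau>), v) \<in> {Q \<in> points. near_face k \<sigma> u \<epsilon> Q}}
      = cube m \<inter> (\<Union>\<beta>\<in>Bs. {v. \<forall>p<m. \<bar>v p - face_point \<beta> m u p\<bar> < \<epsilon>})"
    using \<open>\<tau> \<in> Cs m\<close> by (auto simp: Bs_def points_iff near_face.simps)
  moreover have "open (\<Union>\<beta>\<in>Bs. {v. \<forall>p<m. \<bar>v p - face_point \<beta> m u p\<bar> < \<epsilon>})"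
    using open_coordinate_box by blast
  ultimately show "openin (cube_top m) {v. ((m, \<tau>), v) \<in> {Q \<in> points. near_face k \<sigma> u \<epsilon> Q}}"
    by (simp add: cube_top_def openin_open_Int)
qed auto

lemma openin_nbhd:
  assumes "eps_interior k u \<epsilon>"
  shows "openin (realisation Cs d) (nbhd k \<sigma> u \<epsilon>)"
proof -
  have "openin (cdisj Cs) {Q \<in> points. class_of Q \<in> nbhd k \<sigma> u \<epsilon>}"
    using openin_near_face points_class_of_nbhd[OF assms] by simp
  moreover have "nbhd k \<sigma> u \<epsilon> \<subseteq> topspace (realisation Cs d)"
    by (auto simp: nbhd_def topspace_realisation)
  ultimately show ?thesis using quotient_map_class_of by (simp add: quotient_map_def)
qed

lemma class_of_mem_nbhd:
  assumes "((k, \<sigma>), u) \<in> points" "0 < \<epsilon>"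
  shows "class_of ((k, \<sigma>), u) \<in> nbhd k \<sigma> u \<epsilon>"
proof -
  have "near_face k \<sigma> u \<epsilon> ((k, \<sigma>), u)"
    unfolding near_face.simps using assms free_pattern[of k "\<lambda>_. None"] by (intro exI[of _ "\<lambda>_. None"]) simp
  then show ?thesis using class_of_self[OF assms(1)] assms(1) unfolding nbhd_def classes_eq by blast
qed

lemma near_face_unique:
  assumes u1: "eps_interior k1 u1 (2 * \<epsilon>)" and u2: "eps_interior k2 u2 (2 * \<epsilon>)"
    and "near_face k1 \<sigma>1 u1 \<epsilon> ((m, \<tau>), v)" "near_face k2 \<sigma>2 u2 \<epsilon> ((m, \<tau>), v)"
  shows "k1 = k2 \<and> \<sigma>1 = \<sigma>2 \<and> (\<forall>j<k1. \<bar>u1 j - u2 j\<bar> < 2 * \<epsilon>)"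
proof -
  obtain \<beta>1 where \<beta>1: "\<forall>p\<ge>m. \<beta>1 p = None" "m - fixed_count \<beta>1 m = k1" "face_cell d \<beta>1 m m \<tau> = \<sigma>1"
    "\<forall>p<m. \<bar>v p - face_point \<beta>1 m u1 p\<bar> < \<epsilon>" using assms(3) by (auto simp: near_face.simps)
  obtain \<beta>2 where \<beta>2: "\<forall>p\<ge>m. \<beta>2 p = None" "m - fixed_count \<beta>2 m = k2" "face_cell d \<beta>2 m m \<tau> = \<sigma>2"
    "\<forall>p<m. \<bar>v p - face_point \<beta>2 m u2 p\<bar> < \<epsilon>" using assms(4) by (auto simp: near_face.simps)
  have close: "\<bar>face_point \<beta>1 m u1 p - face_point \<beta>2 m u2 p\<bar> < 2 * \<epsilon>" if "p < m" for p
    using \<beta>1(4) \<beta>2(4) that by (smt (verit))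
  have "\<beta>1 = \<beta>2" using face_pattern_unique[OF u1 \<beta>1(2,1) u2 \<beta>2(2,1)] close by blast
  moreover have "\<bar>u1 j - u2 j\<bar> < 2 * \<epsilon>" if j: "j < k1" for j
  proof -
    obtain p where "p < m" "\<beta>1 p = None" "p - fixed_count \<beta>1 p = j"
      using free_rank_surj[of j m \<beta>1] j \<beta>1(2) by auto
    then show ?thesis using close[of p] \<open>\<beta>1 = \<beta>2\<close> by (simp add: face_point_apply)
  qed
  ultimately show ?thesis using \<beta>1 \<beta>2 by auto
qed

lemma disjnt_nbhd:
  assumes u1: "eps_interior k1 u1 (2 * \<epsilon>)" and u2: "eps_interior k2 u2 (2 * \<epsilon>)"
    and apart: "k1 = k2 \<Longrightarrow> \<sigma>1 = \<sigma>2 \<Longrightarrow> \<exists>j<k1. 2 * \<epsilon> \<le> \<bar>u1 j - u2 j\<bar>"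
  shows "disjnt (nbhd k1 \<sigma>1 u1 \<epsilon>) (nbhd k2 \<sigma>2 u2 \<epsilon>)"
proof (unfold disjnt_iff, intro allI notI, elim conjE)
  fix Z assume "Z \<in> nbhd k1 \<sigma>1 u1 \<epsilon>" "Z \<in> nbhd k2 \<sigma>2 u2 \<epsilon>"
  then obtain Q1 Q2 where Z: "Z \<in> classes" "Q1 \<in> Z" "Q2 \<in> Z"
    and near: "near_face k1 \<sigma>1 u1 \<epsilon> Q1" "near_face k2 \<sigma>2 u2 \<epsilon> Q2"
    by (auto simp: nbhd_def)
  have "0 < \<epsilon>" using u1 by (simp add: eps_interior_def)
  then have "eps_interior k2 u2 \<epsilon>" using eps_interior_mono[OF u2] by simp
  then have "near_face k2 \<sigma>2 u2 \<epsilon> Q1"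
    using near(2) near_face_class_of classes_eq_class_of[OF Z(1,2)] Z(3) by blast
  moreover obtain m \<tau> v where "Q1 = ((m, \<tau>), v)" by (metis prod.collapse)
  ultimately have "k1 = k2 \<and> \<sigma>1 = \<sigma>2 \<and> (\<forall>j<k1. \<bar>u1 j - u2 j\<bar> < 2 * \<epsilon>)"
    using near_face_unique[OF u1 u2] near(1) by blast
  then show False using apart by (meson not_le)
qed

lemma Hausdorff_realisation: "Hausdorff_space (realisation Cs d)"
  unfolding Hausdorff_space_def topspace_realisation
proof (intro allI impI, elim conjE)
  fix X Y assume "X \<in> classes" "Y \<in> classes" "X \<noteq> Y"
  obtain k1 \<sigma>1 u1 where A: "((k1, \<sigma>1), u1) \<in> points" "interior_point ((k1, \<sigma>1), u1)"
    "X = class_of ((k1, \<sigma>1), u1)"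
    using classes_interior_point[OF \<open>X \<in> classes\<close>] by (metis prod.collapse)
  obtain k2 \<sigma>2 u2 where B: "((k2, \<sigma>2), u2) \<in> points" "interior_point ((k2, \<sigma>2), u2)"
    "Y = class_of ((k2, \<sigma>2), u2)"
    using classes_interior_point[OF \<open>Y \<in> classes\<close>] by (metis prod.collapse)
  have differ: "\<exists>j<k1. u1 j \<noteq> u2 j" if "k1 = k2" "\<sigma>1 = \<sigma>2"
  proof (rule ccontr)
    assume "\<not> (\<exists>j<k1. u1 j \<noteq> u2 j)"
    then have "u1 = u2" using A(1) B(1) that by (auto simp: points_iff cube_def fun_eq_iff) (metis not_le)
    then show False using A B \<open>X \<noteq> Y\<close> that by simp
  qed
  have "\<exists>\<delta>. eps_interior k1 u1 \<delta>" "\<exists>\<delta>. eps_interior k2 u2 \<delta>"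
    using A(2) B(2) by (simp_all add: eps_interior_exists interior_point_def)
  then obtain \<epsilon> where u: "eps_interior k1 u1 (2 * \<epsilon>)" "eps_interior k2 u2 (2 * \<epsilon>)"
    and apart: "\<And>j. j < k1 \<Longrightarrow> u1 j \<noteq> u2 j \<Longrightarrow> 2 * \<epsilon> \<le> \<bar>u1 j - u2 j\<bar>"
    using separating_eps_exists by metis
  have "0 < \<epsilon>" using u(1) by (simp add: eps_interior_def)
  have "disjnt (nbhd k1 \<sigma>1 u1 \<epsilon>) (nbhd k2 \<sigma>2 u2 \<epsilon>)"
  proof (rule disjnt_nbhd[OF u])
    assume "k1 = k2" "\<sigma>1 = \<sigma>2"
    then obtain j where "j < k1" "u1 j \<noteq> u2 j" using differ by blast
    then show "\<exists>j<k1. 2 * \<epsilon> \<le> \<bar>u1 j - u2 j\<bar>" using apart by blast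
  qed
  moreover have "eps_interior k1 u1 \<epsilon>" "eps_interior k2 u2 \<epsilon>"
    using eps_interior_mono[OF u(1) \<open>0 < \<epsilon>\<close>] eps_interior_mono[OF u(2) \<open>0 < \<epsilon>\<close>] \<open>0 < \<epsilon>\<close>
    by auto
  then have "openin (realisation Cs d) (nbhd k1 \<sigma>1 u1 \<epsilon>)" "openin (realisation Cs d) (nbhd k2 \<sigma>2 u2 \<epsilon>)"
    by (auto intro: openin_nbhd)
  moreover have "X \<in> nbhd k1 \<sigma>1 u1 \<epsilon>" "Y \<in> nbhd k2 \<sigma>2 u2 \<epsilon>"
    using class_of_mem_nbhd A(1,3) B(1,3) \<open>0 < \<epsilon>\<close> by auto
  ultimately show "\<exists>U V. openin (realisation Cs d) U \<and> openin (realisation Cs d) V \<and> X \<in> U \<and> Y \<in> V \<and> disjnt U V"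
    by blast
qed

end

section \<open>The James complex\<close>

lemma sorted_list_of_set_nth_rank:
  fixes S :: "nat set"
  assumes "finite S" "j < card S"
  shows "sorted_list_of_set S ! j \<in> S \<and> card {q \<in> S. q < sorted_list_of_set S ! j} = j"
proof -
  define xs where "xs = sorted_list_of_set S"
  have sorted: "sorted_wrt (<) xs" and set: "set xs = S" and "distinct xs" and j: "j < length xs"
    using assms by (auto simp: xs_def strict_sorted_list_of_set)
  have "{q \<in> S. q < xs ! j} = set (take j xs)"
  proof (intro set_eqI iffI)
    fix q assume "q \<in> {q \<in> S. q < xs ! j}"
    then obtain i where i: "i < length xs" "xs ! i = q" "q < xs ! j" using set by (auto simp: in_set_conv_nth)
    then have "i < j" using sorted j by (metis leI order.asym sorted_wrt_nth_less le_neq_implies_less)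
    then show "q \<in> set (take j xs)" using i by (auto simp: in_set_conv_nth)
  next
    fix q assume "q \<in> set (take j xs)"
    then obtain i where "i < j" "xs ! i = q" using j by (auto simp: in_set_conv_nth)
    then show "q \<in> {q \<in> S. q < xs ! j}" using sorted j set by (auto intro: sorted_wrt_nth_less)
  qed
  moreover have "card (set (take j xs)) = j" using \<open>distinct xs\<close> j by (simp add: distinct_card)
  moreover have "xs ! j \<in> S" using set j by auto
  ultimately show ?thesis by (simp add: xs_def)
qed

lemma sorted_list_of_set_rank_nth:
  fixes S :: "nat set"
  assumes "finite S" "s \<in> S"
  shows "sorted_list_of_set S ! card {q \<in> S. q < s} = s"
proof -
  obtain i where "i < length (sorted_list_of_set S)" "sorted_list_of_set S ! i = s"
    using assms by (metis in_set_conv_nth set_sorted_list_of_set)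
  then show ?thesis using sorted_list_of_set_nth_rank[of S i] assms by simp
qed

definition renumber_without :: "nat \<Rightarrow> nat set \<Rightarrow> nat set" where
  "renumber_without s S = (\<lambda>i. if i < s then i else i - 1) ` (S - {s})"

lemma renumber_without_iff: "i \<in> renumber_without s S \<longleftrightarrow> (if i < s then i \<in> S else Suc i \<in> S)"
proof
  assume "i \<in> renumber_without s S"
  then obtain i' where "i' \<in> S" "i' \<noteq> s" "i = (if i' < s then i' else i' - 1)"
    unfolding renumber_without_def by blast
  then show "if i < s then i \<in> S else Suc i \<in> S" by (auto split: if_splits)
next
  assume "if i < s then i \<in> S else Suc i \<in> S"
  then show "i \<in> renumber_without s S"
    unfolding renumber_without_def by (cases "i < s") (auto intro: image_eqI[of _ _ i] image_eqI[of _ _ "Suc i"])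
qed

lemma inj_on_renumber: "inj_on (\<lambda>i. if i < s then i else i - 1) (S - {s :: nat})"
  by (auto simp: inj_on_def split: if_splits)

lemma card_renumber_without: "finite S \<Longrightarrow> s \<in> S \<Longrightarrow> card (renumber_without s S) = card S - 1"
  using card_image[OF inj_on_renumber, of s S] by (simp add: renumber_without_def)

lemma renumber_without_subset: "S \<subseteq> {1..N} \<Longrightarrow> s \<in> S \<Longrightarrow> renumber_without s S \<subseteq> {1..N - 1}"
  unfolding renumber_without_def by (auto simp: subset_eq)

lemma finite_renumber_without: "finite S \<Longrightarrow> finite (renumber_without s S)"
  by (simp add: renumber_without_def)

lemma renumber_without_below: "t \<le> s \<Longrightarrow> {q \<in> renumber_without s S. q < t} = {q \<in> S. q < t}"
  by (auto simp: renumber_without_iff)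

lemma card_le_renumber_without:
  assumes "finite S" "s \<in> S" "s \<le> t"
  shows "card {q \<in> S. q \<le> t} = Suc (card {q \<in> renumber_without s S. q < t})"
proof -
  have "{q \<in> renumber_without s S. q < t} = (\<lambda>i. if i < s then i else i - 1) ` ({q \<in> S. q \<le> t} - {s})"
    using assms(3) unfolding renumber_without_def by (force split: if_splits)
  moreover have "inj_on (\<lambda>i. if i < s then i else i - 1) ({q \<in> S. q \<le> t} - {s})"
    by (rule inj_on_subset[OF inj_on_renumber]) auto
  ultimately have "card {q \<in> renumber_without s S. q < t} = card ({q \<in> S. q \<le> t} - {s})"
    by (simp only: card_image)
  moreover have "0 < card {q \<in> S. q \<le> t}" using assms by (auto simp: card_gt_0_iff)
  ultimately show ?thesis using assms by simp
qed

lemma jsect_cube_face: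
  assumes fin: "finite S" and s: "s \<in> S" "1 \<le> s" "s \<le> N"
    and rank: "card {q \<in> S. q < s} = j - 1" and "1 \<le> j"
  shows "jsect S N (cube_face j e t) = cube_face s e (jsect (renumber_without s S) (N - 1) t)"
proof
  fix p
  let ?S' = "renumber_without s S"
  consider "N \<le> p" | "p < N" "Suc p < s" | "p < N" "Suc p = s" | "p < N" "s \<le> p" by linarith
  then show "jsect S N (cube_face j e t) p = cube_face s e (jsect ?S' (N - 1) t) p"
  proof cases
    case 1
    then have "\<not> p < s - 1" "p \<noteq> s - 1" "\<not> p - 1 < N - 1" using s by auto
    then show ?thesis using 1 by (simp add: jsect_def cube_face_apply)
  next
    case 2
    have "{q \<in> ?S'. q \<le> p} = {q \<in> S. q \<le> p}" "Suc p \<in> ?S' \<longleftrightarrow> Suc p \<in> S"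
      using 2 by (auto simp: renumber_without_iff)
    moreover have "card {q \<in> S. q \<le> p} < j - 1" if "Suc p \<in> S"
    proof -
      have "insert (Suc p) {q \<in> S. q \<le> p} \<subseteq> {q \<in> S. q < s}" using 2 that by auto
      from card_mono[OF _ this] show ?thesis using fin rank by simp
    qed
    moreover have "p < s - 1" "p < N - 1" using 2 s by auto
    ultimately show ?thesis
      using 2 by (cases "Suc p \<in> S") (simp_all add: jsect_def cube_face_apply)
  next
    case 3
    then have "{q \<in> S. q \<le> p} = {q \<in> S. q < s}" by auto
    then have "jsect S N (cube_face j e t) p = of_bool e"
      using 3 s rank by (simp add: jsect_def cube_face_apply)
    moreover have "p = s - 1" using 3 by simp
    ultimately show ?thesis by (simp add: cube_face_apply)
  next
    case 4
    define c where "c = card {q \<in> ?S'. q \<le> p - 1}"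
    have "{q \<in> ?S'. q < p} = {q \<in> ?S'. q \<le> p - 1}" using 4 s by auto
    then have card: "card {q \<in> S. q \<le> p} = Suc c"
      using card_le_renumber_without[OF fin s(1) 4(2)] by (simp add: c_def)
    have "{q \<in> S. q < s} \<subseteq> {q \<in> ?S'. q \<le> p - 1}"
      using 4 by (auto simp: renumber_without_iff)
    then have "j - 1 \<le> c" unfolding c_def rank[symmetric] by (rule card_mono[rotated]) (simp add: fin finite_renumber_without)
    then have "cube_face j e t (Suc c) = t c" using \<open>1 \<le> j\<close> by (simp add: cube_face_apply)
    moreover have "Suc (p - 1) \<in> ?S' \<longleftrightarrow> Suc p \<in> S" "Suc (p - 1) = p" "p - 1 < N - 1" "\<not> p < s - 1" "p \<noteq> s - 1"
      using 4 s by (auto simp: renumber_without_iff)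
    ultimately show ?thesis using 4 card
      by (cases "Suc p \<in> S") (simp_all add: jsect_def cube_face_apply c_def)
  qed
qed

lemma jface_apply:
  "jface n d k j e (x, S) =
    (let s = sorted_list_of_set S ! (j - 1) in (d (n + k) s e x, renumber_without s S))"
  by (simp add: jface_def renumber_without_def)

lemma jface_eq:
  assumes "(x, S) \<in> jcells n Cs k" "1 \<le> j" "j \<le> k"
    and s: "s = sorted_list_of_set S ! (j - 1)"
  shows "s \<in> S" "card {q \<in> S. q < s} = j - 1" "1 \<le> s" "s \<le> n + k"
    "jface n d k j e (x, S) = (d (n + k) s e x, renumber_without s S)"
proof -
  have S: "finite S" "card S = k" "S \<subseteq> {1..n + k}"
    using assms by (auto simp: jcells_def intro: finite_subset)
  then show "s \<in> S" "card {q \<in> S. q < s} = j - 1"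
    using sorted_list_of_set_nth_rank[of S "j - 1"] assms by auto
  then show "1 \<le> s" "s \<le> n + k" using S by auto
  show "jface n d k j e (x, S) = (d (n + k) s e x, renumber_without s S)"
    by (simp add: jface_apply s Let_def)
qed

lemma renumber_without_commute:
  "s < s' \<Longrightarrow> renumber_without (s' - 1) (renumber_without s S) = renumber_without s (renumber_without s' S)"
  by (auto simp: set_eq_iff renumber_without_iff)

context box_set
begin

lemma jface_mem:
  assumes "1 \<le> j" "j \<le> k" "y \<in> jcells n Cs k"
  shows "jface n d k j e y \<in> jcells n Cs (k - 1)"
proof -
  obtain x S where y: "y = (x, S)" by (cases y)
  define s where "s = sorted_list_of_set S ! (j - 1)"
  have "(x, S) \<in> jcells n Cs k" using assms y by simp
  note s = jface_eq[OF this assms(1,2) s_def]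
  have S: "finite S" "card S = k" "S \<subseteq> {1..n + k}" "x \<in> Cs (n + k)"
    using assms y by (auto simp: jcells_def intro: finite_subset)
  have "d (n + k) s e x \<in> Cs (n + k - 1)" using s S assms y by (intro face_mem) auto
  moreover have "renumber_without s S \<subseteq> {1..n + (k - 1)}"
    using renumber_without_subset[OF S(3)] s assms y by auto
  moreover have "card (renumber_without s S) = k - 1" using card_renumber_without s S assms y by simp
  ultimately show ?thesis using s assms y by (simp add: jcells_def)
qed

lemma jface_comm:
  assumes ij: "1 \<le> i" "i < j" "j \<le> k" and "y \<in> jcells n Cs k"
  shows "jface n d (k - 1) (j - 1) h (jface n d k i e y) = jface n d (k - 1) i e (jface n d k j h y)"
proof -
  obtain x S where y_eq: "y = (x, S)" by (cases y)
  then have y: "(x, S) \<in> jcells n Cs k" using assms by simp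
  define si where "si = sorted_list_of_set S ! (i - 1)"
  define sj where "sj = sorted_list_of_set S ! (j - 1)"
  note I = jface_eq[OF y _ _ si_def] and J = jface_eq[OF y _ _ sj_def]
  have S: "finite S" "x \<in> Cs (n + k)" using y by (auto simp: jcells_def intro: finite_subset)
  have "si < sj"
  proof (rule ccontr)
    assume "\<not> si < sj"
    then have "{q \<in> S. q < sj} \<subseteq> {q \<in> S. q < si}" by auto
    then have "card {q \<in> S. q < sj} \<le> card {q \<in> S. q < si}" using S by (intro card_mono) auto
    then show False using I J ij by simp
  qed
  have "{q \<in> S. q \<le> sj - 1} = {q \<in> S. q < sj}" using J ij by auto
  then have "card {q \<in> renumber_without si S. q < sj - 1} = j - 1 - 1"
    using card_le_renumber_without[OF S(1), of si "sj - 1"] I J ij \<open>si < sj\<close> by simp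
  moreover have "\<not> sj - 1 < si" "Suc (sj - 1) = sj" using \<open>si < sj\<close> by auto
  then have "sj - 1 \<in> renumber_without si S" using J ij by (simp add: renumber_without_iff)
  ultimately have nth_j: "sorted_list_of_set (renumber_without si S) ! (j - 1 - 1) = sj - 1"
    using sorted_list_of_set_rank_nth[OF finite_renumber_without[OF S(1)]] by metis
  have "card {q \<in> renumber_without sj S. q < si} = i - 1"
    using renumber_without_below[of si sj S] \<open>si < sj\<close> I ij by simp
  moreover have "si \<in> renumber_without sj S" using I ij \<open>si < sj\<close> by (simp add: renumber_without_iff)
  ultimately have nth_i: "sorted_list_of_set (renumber_without sj S) ! (i - 1) = si"
    using sorted_list_of_set_rank_nth[OF finite_renumber_without[OF S(1)]] by metis
  have "d (n + k - 1) (sj - 1) h (d (n + k) si e x) = d (n + k - 1) si e (d (n + k) sj h x)"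
    using face_comm[of si sj "n + k" x h e] I J ij \<open>si < sj\<close> S by simp
  moreover have "n + (k - 1) = n + k - 1" using ij by auto
  ultimately show ?thesis
    unfolding y_eq jface_apply Let_def si_def[symmetric] sj_def[symmetric] nth_i nth_j
    using renumber_without_commute[OF \<open>si < sj\<close>] by simp
qed

lemma box_set_jcells: "box_set (jcells n Cs) (jface n d)"
proof -
  have "\<forall>k j e y. 1 \<le> j \<and> j \<le> k \<and> y \<in> jcells n Cs k \<longrightarrow> jface n d k j e y \<in> jcells n Cs (k - 1)"
    using jface_mem by blast
  moreover have "\<forall>k i j e h y. 1 \<le> i \<and> i < j \<and> j \<le> k \<and> y \<in> jcells n Cs k \<longrightarrow>
      jface n d (k - 1) (j - 1) h (jface n d k i e y) = jface n d (k - 1) i e (jface n d k j h y)"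
    using jface_comm by blast
  ultimately show ?thesis by (simp add: box_set_def is_cset_def)
qed

end

section \<open>The projection of the James bundle is proper\<close>

definition jproj_point :: "nat \<Rightarrow> ('a \<times> nat set) cell_point \<Rightarrow> 'a cell_point" where
  "jproj_point n = (\<lambda>((k, (x, S)), t). ((n + k, x), jsect S (n + k) t))"

lemma jproj_eq: "jproj n Cs d = liftmap (crel Cs d) (jproj_point n)"
  by (simp add: jproj_def jproj_point_def)

lemma cube_coord_bounds: "t \<in> cube k \<Longrightarrow> 0 \<le> t r \<and> t r \<le> 1"
  unfolding cube_def by (cases "r < k") auto

lemma jsect_in_cube: "t \<in> cube k \<Longrightarrow> jsect S N t \<in> cube N"
  unfolding cube_def[of N] jsect_def using cube_coord_bounds[of t k] by auto

lemma interior_jsect: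
  assumes "\<forall>j<k. 0 < t j \<and> t j < 1" "finite S" "card S = k"
  shows "\<forall>p<N. 0 < jsect S N t p \<and> jsect S N t p < 1"
proof -
  have "card {q \<in> S. q \<le> p} < k" if "Suc p \<in> S" for p
  proof -
    have "Suc p \<notin> {q \<in> S. q \<le> p}" by simp
    then have "{q \<in> S. q \<le> p} \<subset> S" using that by blast
    then show ?thesis using psubset_card_mono assms by blast
  qed
  then show ?thesis using assms by (auto simp: jsect_def)
qed

lemma jcells_points_iff:
  "((k, (x, S)), t) \<in> topspace (cdisj (jcells n Cs)) \<longleftrightarrow>
    x \<in> Cs (n + k) \<and> S \<subseteq> {1..n + k} \<and> card S = k \<and> t \<in> cube k"
  by (simp add: topspace_cdisj jcells_def)

lemma jproj_point_points:
  "P \<in> topspace (cdisj (jcells n Cs)) \<Longrightarrow> jproj_point n P \<in> topspace (cdisj Cs)"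
  by (cases P) (auto simp: jproj_point_def topspace_cdisj jcells_def intro: jsect_in_cube)

lemma interior_point_jproj_point:
  assumes "P \<in> topspace (cdisj (jcells n Cs))" "interior_point P"
  shows "interior_point (jproj_point n P)"
proof -
  obtain k x S t where P: "P = ((k, (x, S)), t)" by (metis prod.collapse)
  then have "finite S" "card S = k" using assms by (auto simp: jcells_points_iff intro: finite_subset)
  then show ?thesis
    using assms P interior_jsect[of k t S "n + k"] by (auto simp: jproj_point_def interior_point_def)
qed

lemma continuous_map_from_sum_topology:
  assumes "\<And>i. i \<in> I \<Longrightarrow> continuous_map (X i) Y (\<lambda>x. f (i, x))"
  shows "continuous_map (sum_topology X I) Y f"
  unfolding continuous_map_def
proof (intro conjI allI impI)
  show "f \<in> topspace (sum_topology X I) \<rightarrow> topspace Y"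
    using assms by (auto simp: continuous_map_def Pi_iff)
next
  fix U assume "openin Y U"
  then show "openin (sum_topology X I) {x \<in> topspace (sum_topology X I). f x \<in> U}"
    using assms by (auto simp: openin_sum_topology continuous_map_def)
qed

lemma continuous_on_jsect: "continuous_on A (jsect S N)"
proof (rule continuous_on_coordinatewise_then_product)
  fix p
  show "continuous_on A (\<lambda>x. jsect S N x p)"
    unfolding jsect_def
    by (cases "p < N"; cases "Suc p \<in> S") (auto intro: continuous_on_subset[OF continuous_on_product_coordinates])
qed

lemma continuous_on_face_point: "continuous_on A (face_point \<beta> m)"
proof (rule continuous_on_coordinatewise_then_product)
  fix p
  show "continuous_on A (\<lambda>x. face_point \<beta> m x p)"
    unfolding face_point_apply
    by (cases "p < m"; cases "\<beta> p") (auto intro: continuous_on_subset[OF continuous_on_product_coordinates])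
qed

lemma continuous_map_jproj_point: "continuous_map (cdisj (jcells n Cs)) (cdisj Cs) (jproj_point n)"
  unfolding cdisj_def[of "jcells n Cs"]
proof (rule continuous_map_from_sum_topology)
  fix i assume i: "i \<in> Sigma UNIV (jcells n Cs)"
  obtain k x S where i_eq: "i = (k, (x, S))" by (metis prod.collapse)
  have "continuous_map (cube_top k) (cube_top (n + k)) (jsect S (n + k))"
    by (auto simp: cube_top_def continuous_on_jsect jsect_in_cube)
  moreover have "x \<in> Cs (n + k)" using i i_eq by (auto simp: jcells_def)
  then have "continuous_map (cube_top (n + k)) (cdisj Cs) (\<lambda>v. ((n + k, x), v))"
    unfolding cdisj_def
    using continuous_map_component_injection[of "(n + k, x)" "Sigma UNIV Cs" "\<lambda>(n, x). cube_top n"] by simp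
  ultimately have "continuous_map (cube_top k) (cdisj Cs) ((\<lambda>v. ((n + k, x), v)) \<circ> jsect S (n + k))"
    by (rule continuous_map_compose)
  then show "continuous_map ((\<lambda>(n, x). cube_top n) i) (cdisj Cs) (\<lambda>t. jproj_point n (i, t))"
    by (simp add: i_eq jproj_point_def o_def)
qed

lemma compact_space_cube_top: "compact_space (cube_top k)"
proof -
  have "cube k = PiE UNIV (\<lambda>i. if i < k then {0..1} else {0::real})"
    unfolding cube_def by (auto simp: PiE_iff split: if_splits)
  moreover have "compactin (product_topology (\<lambda>_. euclidean) UNIV) (PiE UNIV (\<lambda>i. if i < k then {0..1} else {0::real}))"
    by (subst compactin_PiE) auto
  ultimately show ?thesis
    unfolding cube_top_def by (intro compact_space_subtopology) (simp add: euclidean_product_topology)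
qed

lemma Hausdorff_space_cube_top: "Hausdorff_space (cube_top k)"
  unfolding cube_top_def
  by (metis Hausdorff_space_euclidean Hausdorff_space_subtopology)

lemma closedin_cube_top_image:
  assumes "closedin (cube_top k) T" "continuous_map (cube_top k) (cube_top m) g"
  shows "closedin (cube_top m) (g ` T)"
  using assms compact_space_cube_top closedin_compact_space image_compactin Hausdorff_space_cube_top
    compactin_imp_closedin by metis

definition patterns_below :: "nat \<Rightarrow> face_pattern set" where
  "patterns_below m = (\<lambda>g p. if p < m then g p else None) ` PiE {..<m} (\<lambda>_. UNIV)"

lemma finite_patterns_below: "finite (patterns_below m)"
  unfolding patterns_below_def by (intro finite_imageI finite_PiE) auto

lemma boundary_pattern_below: "boundary_pattern u m \<in> patterns_below m"
  unfolding patterns_below_def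
  by (rule image_eqI[of _ _ "restrict (boundary_pattern u m) {..<m}"]) (auto simp: boundary_pattern_def)

lemma jsect_left_inverse:
  assumes "S \<subseteq> {1..N}" "t \<in> cube (card S)"
  shows "(\<lambda>j. if j < card S then jsect S N t (sorted_list_of_set S ! j - 1) else 0) = t"
proof
  fix j
  have "finite S" using assms(1) by (rule finite_subset) simp
  show "(if j < card S then jsect S N t (sorted_list_of_set S ! j - 1) else 0) = t j"
  proof (cases "j < card S")
    case True
    define s where "s = sorted_list_of_set S ! j"
    have s: "s \<in> S" "card {q \<in> S. q < s} = j"
      using sorted_list_of_set_nth_rank[OF \<open>finite S\<close> True] by (auto simp: s_def)
    then have "1 \<le> s" "s \<le> N" using assms(1) by auto
    then have "{q \<in> S. q \<le> s - 1} = {q \<in> S. q < s}" "Suc (s - 1) = s" "s - 1 < N" by auto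
    then show ?thesis using s True by (simp add: jsect_def s_def)
  next
    case False
    then show ?thesis using assms(2) by (simp add: cube_def)
  qed
qed

lemma closedin_face_jsect_image:
  assumes A: "closedin (cdisj (jcells n Cs)) A"
  shows "closedin (cube_top m) ((\<lambda>t. face_point \<beta> m (jsect S (m - fixed_count \<beta> m) t)) `
    {t. ((m - fixed_count \<beta> m - n, (\<sigma>, S)), t) \<in> A \<and> n \<le> m - fixed_count \<beta> m})"
proof (cases "n \<le> m - fixed_count \<beta> m")
  case True
  define k where "k = m - fixed_count \<beta> m - n"
  have "closedin (cube_top k) {t. ((k, (\<sigma>, S)), t) \<in> A}"
  proof (cases "(\<sigma>, S) \<in> jcells n Cs k")
    case False
    then have "{t. ((k, (\<sigma>, S)), t) \<in> A} = {}"
      using closedin_subset[OF A] by (auto simp: topspace_cdisj)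
    then show ?thesis by simp
  qed (use A in \<open>simp add: closedin_cdisj_iff\<close>)
  moreover have "continuous_map (cube_top k) (cube_top m) (\<lambda>t. face_point \<beta> m (jsect S (m - fixed_count \<beta> m) t))"
  proof -
    have "continuous_on (cube k) (face_point \<beta> m \<circ> jsect S (m - fixed_count \<beta> m))"
      by (intro continuous_on_compose continuous_on_jsect continuous_on_face_point)
    moreover have "face_point \<beta> m (jsect S (m - fixed_count \<beta> m) t) \<in> cube m" if "t \<in> cube k" for t
    proof -
      have "jsect S (m - fixed_count \<beta> m) t \<in> cube (m - fixed_count \<beta> m)"
        using that by (rule jsect_in_cube)
      then have "face_point \<beta> m (jsect S (m - fixed_count \<beta> m) t) \<in> cube (m - fixed_count \<beta> m + fixed_count \<beta> m)"
        using fixed_count_le[of \<beta> m] by (intro face_point_in_cube) auto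
      then show ?thesis using fixed_count_le[of \<beta> m] by simp
    qed
    ultimately show ?thesis by (auto simp: cube_top_def o_def)
  qed
  ultimately show ?thesis using True by (simp add: k_def closedin_cube_top_image)
qed simp

locale james_complex = box_set +
  fixes n :: nat
begin

sublocale J: box_set "jcells n Cs" "jface n d"
  by (rule box_set_jcells)

sublocale J_proj: box_set_pair "jcells n Cs" "jface n d" Cs d ..

lemma normal_form_jproj_point_cgen:
  assumes "(P, Q) \<in> cgen (jcells n Cs) (jface n d)"
  shows "normal_form (jproj_point n P) = normal_form (jproj_point n Q)"
proof -
  obtain k j e x S t where PQ: "P = ((k - 1, jface n d k j e (x, S)), t)" "Q = ((k, (x, S)), cube_face j e t)"
    "1 \<le> j" "j \<le> k" "(x, S) \<in> jcells n Cs k" "t \<in> cube (k - 1)"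
    using assms by (auto simp: cgen_def)
  define s where "s = sorted_list_of_set S ! (j - 1)"
  note s = jface_eq[OF PQ(5,3,4) s_def]
  have S: "finite S" "x \<in> Cs (n + k)" using PQ by (auto simp: jcells_def intro: finite_subset)
  have "n + (k - 1) = n + k - 1" using PQ by auto
  then have "jproj_point n P = ((n + k - 1, d (n + k) s e x), jsect (renumber_without s S) (n + k - 1) t)"
    using PQ s by (simp add: jproj_point_def)
  moreover have "jproj_point n Q = ((n + k, x), cube_face s e (jsect (renumber_without s S) (n + k - 1) t))"
    using PQ jsect_cube_face[OF S(1) s(1,3,4,2) PQ(3)] by (simp add: jproj_point_def)
  ultimately show ?thesis using normal_form_face[OF s(3,4) S(2) jsect_in_cube[OF PQ(6)]] by simp
qed

lemma jproj_class_of: "P \<in> J.points \<Longrightarrow> jproj n Cs d (J.class_of P) = class_of (jproj_point n P)"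
  unfolding jproj_eq by (rule J_proj.liftmap_class_of[OF jproj_point_points normal_form_jproj_point_cgen])

lemma continuous_map_jproj: "continuous_map (realisation (jcells n Cs) (jface n d)) (realisation Cs d) (jproj n Cs d)"
  unfolding jproj_eq
  by (rule J_proj.continuous_map_liftmap[OF jproj_point_points normal_form_jproj_point_cgen
        continuous_map_jproj_point])

text \<open>For closed \<open>F\<close>, finitely many of these closed sets make up the
  slice of \<open>p\<^sub>n(F)\<close> over the cell \<open>c\<close>, \<open>\<beta>\<close> being the boundary pattern of \<open>u\<close>.\<close>

definition jslice :: "face_pattern \<Rightarrow> nat set \<Rightarrow> nat \<Rightarrow> 'a \<Rightarrow> ('a \<times> nat set) cell_point set \<Rightarrow> (nat \<Rightarrow> real) set" where
  "jslice \<beta> S m c A = (\<lambda>t. face_point \<beta> m (jsect S (m - fixed_count \<beta> m) t)) `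
     {t. ((m - fixed_count \<beta> m - n, (face_cell d \<beta> m m c, S)), t) \<in> A \<and> n \<le> m - fixed_count \<beta> m}"

lemma jslice_if_over_jproj:
  assumes F: "F \<subseteq> J.classes" and u: "((m, c), u) \<in> points" "class_of ((m, c), u) \<in> jproj n Cs d ` F"
  shows "\<exists>S\<in>Pow {1..m}. u \<in> jslice (boundary_pattern u m) S m c (\<Union>F)"
proof -
  obtain X where X: "X \<in> F" "class_of ((m, c), u) = jproj n Cs d X" using u(2) by auto
  obtain P where P: "P \<in> J.points" "interior_point P" "X = J.class_of P"
    using J.classes_interior_point F X(1) by blast
  obtain k x S t where P_eq: "P = ((k, (x, S)), t)" by (metis prod.collapse)
  have "class_of ((m, c), u) = class_of (jproj_point n P)" using X P jproj_class_of by simp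
  then have "normal_form ((m, c), u) = jproj_point n P"
    using class_of_eq_iff u(1) jproj_point_points[OF P(1)]
      normal_form_interior_point[OF interior_point_jproj_point[OF P(1,2)]] by simp
  moreover define \<beta> where "\<beta> = boundary_pattern u m"
  ultimately have \<beta>: "m - fixed_count \<beta> m = n + k" "face_cell d \<beta> m m c = x" "drop_fixed \<beta> m u = jsect S (n + k) t"
    by (simp_all add: normal_form_def P_eq jproj_point_def)
  have "face_point \<beta> m (drop_fixed \<beta> m u) = u"
    by (rule face_point_drop_fixed) (auto simp: \<beta>_def boundary_pattern_def split: if_splits)
  then have "u = face_point \<beta> m (jsect S (m - fixed_count \<beta> m) t)" using \<beta>(1,3) by simp
  moreover have "P \<in> \<Union>F" using P X(1) J.class_of_self by blast
  then have "t \<in> {t. ((m - fixed_count \<beta> m - n, (face_cell d \<beta> m m c, S)), t) \<in> \<Union>F \<and> n \<le> m - fixed_count \<beta> m}"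
    using \<beta>(1,2) by (simp add: P_eq)
  ultimately have "u \<in> jslice \<beta> S m c (\<Union>F)" unfolding jslice_def by (rule image_eqI)
  moreover have "n + k \<le> m" using \<beta>(1) by arith
  then have "S \<in> Pow {1..m}" using P(1) by (auto simp: P_eq jcells_points_iff)
  ultimately show ?thesis unfolding \<beta>_def by blast
qed

lemma over_jproj_if_jslice:
  assumes F: "F \<subseteq> J.classes" and c: "c \<in> Cs m" and u: "u \<in> jslice \<beta> S m c (\<Union>F)"
  shows "((m, c), u) \<in> points" "class_of ((m, c), u) \<in> jproj n Cs d ` F"
proof -
  obtain t where t: "u = face_point \<beta> m (jsect S (m - fixed_count \<beta> m) t)"
    "((m - fixed_count \<beta> m - n, (face_cell d \<beta> m m c, S)), t) \<in> \<Union>F" "n \<le> m - fixed_count \<beta> m"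
    using u by (auto simp: jslice_def)
  define Q where "Q = ((m - fixed_count \<beta> m - n, (face_cell d \<beta> m m c, S)), t)"
  obtain X where X: "X \<in> F" "Q \<in> X" using t(2) by (auto simp: Q_def)
  then have QX: "Q \<in> J.points" "X = J.class_of Q" using F J.Union_classes J.classes_eq_class_of by blast+
  have "n + (m - fixed_count \<beta> m - n) = m - fixed_count \<beta> m" using t(3) by simp
  then have Q: "jproj_point n Q = ((m - fixed_count \<beta> m, face_cell d \<beta> m m c), jsect S (m - fixed_count \<beta> m) t)"
    by (simp add: Q_def jproj_point_def)
  have "jproj n Cs d X = class_of (jproj_point n Q)" "jproj_point n Q \<in> points"
    using jproj_class_of[OF QX(1)] jproj_point_points[OF QX(1)] QX(2) by simp_all
  moreover have gen: "(jproj_point n Q, ((m, c), u)) \<in> gen_equiv"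
    unfolding Q t(1) using c \<open>jproj_point n Q \<in> points\<close> Q
    by (intro gen_equiv_face_pattern) (auto simp: points_iff)
  ultimately have "((m, c), u) \<in> points" "class_of ((m, c), u) = jproj n Cs d X"
    using gen_equiv_points class_of_eq_iff normal_form_eq_if_gen_equiv[OF gen] by auto
  then show "((m, c), u) \<in> points" "class_of ((m, c), u) \<in> jproj n Cs d ` F" using X(1) by auto
qed

lemma closed_map_jproj:
  "closed_map (realisation (jcells n Cs) (jface n d)) (realisation Cs d) (jproj n Cs d)"
  unfolding closed_map_def
proof (intro allI impI)
  fix F assume "closedin (realisation (jcells n Cs) (jface n d)) F"
  then have F: "F \<subseteq> J.classes" "closedin (cdisj (jcells n Cs)) (\<Union>F)"
    by (simp_all add: J.closedin_realisation_iff)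
  have sub: "jproj n Cs d ` F \<subseteq> classes"
  proof
    fix Y assume "Y \<in> jproj n Cs d ` F"
    then obtain P where "P \<in> J.points" "Y = jproj n Cs d (J.class_of P)"
      using F(1) J.classes_eq by auto
    then show "Y \<in> classes" using jproj_class_of jproj_point_points classes_eq by blast
  qed
  have "closedin (cdisj Cs) {P \<in> points. class_of P \<in> jproj n Cs d ` F}"
    unfolding closedin_cdisj_iff
  proof (intro conjI allI ballI)
    fix m c assume c: "c \<in> Cs m"
    have "closedin (cube_top m) (jslice \<beta> S m c (\<Union>F))" for \<beta> S
      unfolding jslice_def by (rule closedin_face_jsect_image[OF F(2)])
    then have "closedin (cube_top m) (\<Union>S\<in>Pow {1..m}. jslice \<beta> S m c (\<Union>F))" for \<beta>
      by (intro closedin_Union) auto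
    then have "closedin (cube_top m) (\<Union>\<beta>\<in>patterns_below m. \<Union>S\<in>Pow {1..m}. jslice \<beta> S m c (\<Union>F))"
      using finite_patterns_below by (intro closedin_Union) auto
    moreover have "{u. ((m, c), u) \<in> {P \<in> points. class_of P \<in> jproj n Cs d ` F}}
        = (\<Union>\<beta>\<in>patterns_below m. \<Union>S\<in>Pow {1..m}. jslice \<beta> S m c (\<Union>F))"
    proof (intro set_eqI iffI)
      fix u assume "u \<in> {u. ((m, c), u) \<in> {P \<in> points. class_of P \<in> jproj n Cs d ` F}}"
      then obtain S where "S \<in> Pow {1..m}" "u \<in> jslice (boundary_pattern u m) S m c (\<Union>F)"
        using jslice_if_over_jproj[OF F(1), of m c u] by auto
      then show "u \<in> (\<Union>\<beta>\<in>patterns_below m. \<Union>S\<in>Pow {1..m}. jslice \<beta> S m c (\<Union>F))"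
        using boundary_pattern_below[of u m] by blast
    next
      fix u assume "u \<in> (\<Union>\<beta>\<in>patterns_below m. \<Union>S\<in>Pow {1..m}. jslice \<beta> S m c (\<Union>F))"
      then obtain \<beta> S where "u \<in> jslice \<beta> S m c (\<Union>F)" by blast
      then show "u \<in> {u. ((m, c), u) \<in> {P \<in> points. class_of P \<in> jproj n Cs d ` F}}"
        using over_jproj_if_jslice[OF F(1) c] by simp
    qed
    ultimately show "closedin (cube_top m) {u. ((m, c), u) \<in> {P \<in> points. class_of P \<in> jproj n Cs d ` F}}"
      by simp
  qed auto
  then show "closedin (realisation Cs d) (jproj n Cs d ` F)"
    using sub by (simp add: closedin_realisation_iff points_class_of_mem)
qed

lemma finite_jproj_fibre:
  assumes "a \<in> classes"
  shows "finite {w \<in> J.classes. jproj n Cs d w = a}"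
proof -
  obtain m c u where A: "((m, c), u) \<in> points" "interior_point ((m, c), u)" "a = class_of ((m, c), u)"
    using classes_interior_point[OF assms] by (metis prod.collapse)
  define coords where "coords S = (\<lambda>j. if j < card S then u (sorted_list_of_set S ! j - 1) else 0)" for S
  have "{w \<in> J.classes. jproj n Cs d w = a} \<subseteq> (\<lambda>S. J.class_of ((m - n, (c, S)), coords S)) ` Pow {1..m}"
  proof
    fix w assume w: "w \<in> {w \<in> J.classes. jproj n Cs d w = a}"
    then obtain P where P: "P \<in> J.points" "interior_point P" "w = J.class_of P"
      using J.classes_interior_point by blast
    obtain k x S t where P_eq: "P = ((k, (x, S)), t)" by (metis prod.collapse)
    have "class_of (jproj_point n P) = class_of ((m, c), u)" using w P A jproj_class_of by simp
    then have "jproj_point n P = ((m, c), u)"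
      using class_of_inj jproj_point_points interior_point_jproj_point P A by blast
    then have eq: "n + k = m" "x = c" "jsect S m t = u" by (auto simp: P_eq jproj_point_def)
    have "S \<subseteq> {1..m}" "card S = k" "t \<in> cube k" using P(1) eq by (auto simp: P_eq jcells_points_iff)
    then have "coords S = t" unfolding coords_def eq(3)[symmetric] by (intro jsect_left_inverse) auto
    moreover have "m - n = k" using eq by simp
    ultimately have "w = J.class_of ((m - n, (c, S)), coords S)" using P(3) P_eq eq by simp
    then show "w \<in> (\<lambda>S. J.class_of ((m - n, (c, S)), coords S)) ` Pow {1..m}"
      using \<open>S \<subseteq> {1..m}\<close> by blast
  qed
  then show ?thesis by (rule finite_subset) simp
qed

lemma proper_map_jproj: "proper_map (realisation (jcells n Cs) (jface n d)) (realisation Cs d) (jproj n Cs d)"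
  unfolding proper_map_def
proof (intro conjI closed_map_jproj ballI)
  fix a assume "a \<in> topspace (realisation Cs d)"
  then have "finite {w \<in> topspace (realisation (jcells n Cs) (jface n d)). jproj n Cs d w = a}"
    using finite_jproj_fibre by (simp add: topspace_realisation J.topspace_realisation)
  then show "compactin (realisation (jcells n Cs) (jface n d))
      {w \<in> topspace (realisation (jcells n Cs) (jface n d)). jproj n Cs d w = a}"
    by (intro finite_imp_compactin) auto
qed

end

section \<open>Naturality\<close>

definition jmap_point :: "nat \<Rightarrow> (nat \<Rightarrow> 'a \<Rightarrow> 'b) \<Rightarrow> ('a \<times> nat set) cell_point \<Rightarrow> ('b \<times> nat set) cell_point" where
  "jmap_point n f = (\<lambda>((k, (x, S)), t). ((k, (f (n + k) x, S)), t))"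

definition realmap_point :: "(nat \<Rightarrow> 'a \<Rightarrow> 'b) \<Rightarrow> 'a cell_point \<Rightarrow> 'b cell_point" where
  "realmap_point f = (\<lambda>((m, x), t). ((m, f m x), t))"

lemma jmap_eq: "jmap n Ds d f = liftmap (crel (jcells n Ds) (jface n d)) (jmap_point n f)"
  by (simp add: jmap_def jmap_point_def)

lemma realmap_eq: "realmap Ds d f = liftmap (crel Ds d) (realmap_point f)"
  by (simp add: realmap_def realmap_point_def)

lemma interior_point_jmap_point: "interior_point (jmap_point n f P) = interior_point P"
  by (cases P) (auto simp: jmap_point_def interior_point_def)

lemma interior_point_realmap_point: "interior_point (realmap_point f P) = interior_point P"
  by (cases P) (auto simp: realmap_point_def interior_point_def)

lemma realmap_point_jproj_point: "realmap_point f (jproj_point n P) = jproj_point n (jmap_point n f P)"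
  by (cases P) (auto simp: realmap_point_def jproj_point_def jmap_point_def)

lemma jmap_point_jproj_point_eqD:
  "jmap_point n f P = jmap_point n f Q \<Longrightarrow> jproj_point n P = jproj_point n Q \<Longrightarrow> P = Q"
  by (cases P; cases Q) (auto simp: jmap_point_def jproj_point_def)

lemma homeomorphic_map_if_proper_component:
  assumes "Hausdorff_space Y" "continuous_map X Y g" "continuous_map Y Z h" "proper_map X Z (h \<circ> g)"
    "g ` topspace X = topspace Y" "inj_on g (topspace X)"
  shows "homeomorphic_map X Y g"
proof -
  have "proper_map X Y g" using proper_map_from_composition_right assms(1-4) by blast
  then show ?thesis using assms(2,5,6) proper_imp_closed_map bijective_closed_imp_homeomorphic_map by blast
qed

locale james_map = C: james_complex Cs dC n + D: james_complex Ds dD n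
  for Cs :: "nat \<Rightarrow> 'a set" and dC and Ds :: "nat \<Rightarrow> 'b set" and dD and n +
  fixes f :: "nat \<Rightarrow> 'a \<Rightarrow> 'b"
  assumes is_cmap: "is_cmap Cs dC Ds dD f"
begin

sublocale CD: box_set_pair Cs dC Ds dD ..

sublocale JJ: box_set_pair "jcells n Cs" "jface n dC" "jcells n Ds" "jface n dD" ..

lemma map_mem: "x \<in> Cs m \<Longrightarrow> f m x \<in> Ds m"
  using is_cmap by (simp add: is_cmap_def)

lemma map_face: "1 \<le> i \<Longrightarrow> i \<le> m \<Longrightarrow> x \<in> Cs m \<Longrightarrow> f (m - 1) (dC m i e x) = dD m i e (f m x)"
  using is_cmap by (simp add: is_cmap_def)

lemma realmap_point_points: "P \<in> C.points \<Longrightarrow> realmap_point f P \<in> D.points"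
  by (cases P) (auto simp: realmap_point_def topspace_cdisj map_mem)

lemma normal_form_realmap_point_cgen:
  assumes "(P, Q) \<in> cgen Cs dC"
  shows "D.normal_form (realmap_point f P) = D.normal_form (realmap_point f Q)"
proof -
  obtain m i e x t where PQ: "P = ((m - 1, dC m i e x), t)" "Q = ((m, x), cube_face i e t)"
    "1 \<le> i" "i \<le> m" "x \<in> Cs m" "t \<in> cube (m - 1)"
    using assms by (auto simp: cgen_def)
  then show ?thesis
    using D.normal_form_face[OF PQ(3,4) map_mem[OF PQ(5)] PQ(6)] map_face[OF PQ(3-5)]
    by (simp add: realmap_point_def)
qed

lemma jmap_point_points: "P \<in> C.J.points \<Longrightarrow> jmap_point n f P \<in> D.J.points"
  by (cases P) (auto simp: jmap_point_def jcells_points_iff map_mem)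

lemma normal_form_jmap_point_cgen:
  assumes "(P, Q) \<in> cgen (jcells n Cs) (jface n dC)"
  shows "D.J.normal_form (jmap_point n f P) = D.J.normal_form (jmap_point n f Q)"
proof -
  obtain k j e x S t where PQ: "P = ((k - 1, jface n dC k j e (x, S)), t)" "Q = ((k, (x, S)), cube_face j e t)"
    "1 \<le> j" "j \<le> k" "(x, S) \<in> jcells n Cs k" "t \<in> cube (k - 1)"
    using assms by (auto simp: cgen_def)
  define s where "s = sorted_list_of_set S ! (j - 1)"
  note s = jface_eq[OF PQ(5,3,4) s_def]
  have fx: "(f (n + k) x, S) \<in> jcells n Ds k" using PQ(5) map_mem by (simp add: jcells_def)
  have "n + (k - 1) = n + k - 1" using PQ by auto
  moreover have "f (n + k - 1) (dC (n + k) s e x) = dD (n + k) s e (f (n + k) x)"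
    using map_face s PQ(5) by (simp add: jcells_def)
  ultimately have "jmap_point n f P = ((k - 1, jface n dD k j e (f (n + k) x, S)), t)"
    using PQ s jface_eq[OF fx PQ(3,4) s_def] by (simp add: jmap_point_def)
  moreover have "jmap_point n f Q = ((k, (f (n + k) x, S)), cube_face j e t)"
    using PQ by (simp add: jmap_point_def)
  ultimately show ?thesis using D.J.normal_form_face[OF PQ(3,4) fx PQ(6)] by simp
qed

lemma continuous_map_jmap_point:
  "continuous_map (cdisj (jcells n Cs)) (cdisj (jcells n Ds)) (jmap_point n f)"
  unfolding cdisj_def[of "jcells n Cs"]
proof (rule continuous_map_from_sum_topology)
  fix i assume i: "i \<in> Sigma UNIV (jcells n Cs)"
  obtain k x S where i_eq: "i = (k, (x, S))" by (metis prod.collapse)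
  have "(k, (f (n + k) x, S)) \<in> Sigma UNIV (jcells n Ds)"
    using i i_eq map_mem by (auto simp: jcells_def)
  from continuous_map_component_injection[OF this, of "\<lambda>(n, x). cube_top n"]
  have "continuous_map (cube_top k) (cdisj (jcells n Ds)) (\<lambda>v. ((k, (f (n + k) x, S)), v))"
    unfolding cdisj_def by simp
  then show "continuous_map ((\<lambda>(n, x). cube_top n) i) (cdisj (jcells n Ds)) (\<lambda>t. jmap_point n f (i, t))"
    by (simp add: i_eq jmap_point_def)
qed

lemma realmap_class_of: "A \<in> C.points \<Longrightarrow> realmap Ds dD f (C.class_of A) = D.class_of (realmap_point f A)"
  unfolding realmap_eq
  by (rule CD.liftmap_class_of[OF realmap_point_points normal_form_realmap_point_cgen])

lemma jmap_class_of: "P \<in> C.J.points \<Longrightarrow> jmap n Ds dD f (C.J.class_of P) = D.J.class_of (jmap_point n f P)"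
  unfolding jmap_eq
  by (rule JJ.liftmap_class_of[OF jmap_point_points normal_form_jmap_point_cgen])

lemma continuous_map_jmap:
  "continuous_map (realisation (jcells n Cs) (jface n dC)) (realisation (jcells n Ds) (jface n dD)) (jmap n Ds dD f)"
  unfolding jmap_eq
  by (rule JJ.continuous_map_liftmap[OF jmap_point_points normal_form_jmap_point_cgen continuous_map_jmap_point])

lemma pullback_map_mem:
  assumes "w \<in> C.J.classes"
  shows "(jproj n Cs dC w, jmap n Ds dD f w) \<in> (C.classes \<times> D.J.classes) \<inter> {(a, b). realmap Ds dD f a = jproj n Ds dD b}"
proof -
  obtain P where P: "P \<in> C.J.points" "w = C.J.class_of P" using assms C.J.classes_eq by auto
  have "realmap Ds dD f (C.class_of (jproj_point n P)) = jproj n Ds dD (D.J.class_of (jmap_point n f P))"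
    using realmap_class_of[OF jproj_point_points[OF P(1)]] D.jproj_class_of[OF jmap_point_points[OF P(1)]]
    by (simp add: realmap_point_jproj_point)
  moreover have "C.class_of (jproj_point n P) \<in> C.classes"
    using jproj_point_points[OF P(1)] C.classes_eq by blast
  moreover have "D.J.class_of (jmap_point n f P) \<in> D.J.classes"
    using jmap_point_points[OF P(1)] D.J.classes_eq by blast
  ultimately show ?thesis using P C.jproj_class_of[OF P(1)] jmap_class_of[OF P(1)] by simp
qed

lemma pullback_map_inj: "inj_on (\<lambda>w. (jproj n Cs dC w, jmap n Ds dD f w)) C.J.classes"
proof
  fix w1 w2 assume w: "w1 \<in> C.J.classes" "w2 \<in> C.J.classes"
    and eq: "(jproj n Cs dC w1, jmap n Ds dD f w1) = (jproj n Cs dC w2, jmap n Ds dD f w2)"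
  obtain P1 where P1: "P1 \<in> C.J.points" "interior_point P1" "w1 = C.J.class_of P1"
    using C.J.classes_interior_point w(1) by blast
  obtain P2 where P2: "P2 \<in> C.J.points" "interior_point P2" "w2 = C.J.class_of P2"
    using C.J.classes_interior_point w(2) by blast
  have "D.J.class_of (jmap_point n f P1) = D.J.class_of (jmap_point n f P2)"
    using eq P1 P2 jmap_class_of by simp
  then have "jmap_point n f P1 = jmap_point n f P2"
    using D.J.class_of_inj jmap_point_points interior_point_jmap_point P1 P2 by blast
  moreover have "C.class_of (jproj_point n P1) = C.class_of (jproj_point n P2)"
    using eq P1 P2 C.jproj_class_of by simp
  then have "jproj_point n P1 = jproj_point n P2"
    using C.class_of_inj jproj_point_points interior_point_jproj_point P1 P2 by blast
  ultimately have "P1 = P2" by (rule jmap_point_jproj_point_eqD)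
  then show "w1 = w2" using P1 P2 by simp
qed

lemma pullback_map_surj:
  "(C.classes \<times> D.J.classes) \<inter> {(a, b). realmap Ds dD f a = jproj n Ds dD b}
    \<subseteq> (\<lambda>w. (jproj n Cs dC w, jmap n Ds dD f w)) ` C.J.classes"
proof clarify
  fix a b assume a: "a \<in> C.classes" and b: "b \<in> D.J.classes" and ab: "realmap Ds dD f a = jproj n Ds dD b"
  obtain m c u where A: "((m, c), u) \<in> C.points" "interior_point ((m, c), u)" "a = C.class_of ((m, c), u)"
    using C.classes_interior_point[OF a] by (metis prod.collapse)
  obtain k y S t where B: "((k, (y, S)), t) \<in> D.J.points" "interior_point ((k, (y, S)), t)"
    "b = D.J.class_of ((k, (y, S)), t)"
    using D.J.classes_interior_point[OF b] by (metis prod.collapse)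
  have "D.class_of (realmap_point f ((m, c), u)) = D.class_of (jproj_point n ((k, (y, S)), t))"
    using ab A B realmap_class_of D.jproj_class_of by simp
  then have "realmap_point f ((m, c), u) = jproj_point n ((k, (y, S)), t)"
    using realmap_point_points[OF A(1)] jproj_point_points[OF B(1)]
      interior_point_realmap_point[THEN iffD2, OF A(2)] interior_point_jproj_point[OF B(1,2)]
    by (intro D.class_of_inj)
  then have eq: "m = n + k" "y = f m c" "u = jsect S (n + k) t"
    by (auto simp: realmap_point_def jproj_point_def)
  define P where "P = ((k, (c, S)), t)"
  have P: "P \<in> C.J.points" using A B eq by (auto simp: P_def jcells_points_iff C.points_iff)
  have "jproj_point n P = ((m, c), u)" "jmap_point n f P = ((k, (y, S)), t)"
    using eq by (simp_all add: P_def jproj_point_def jmap_point_def)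
  then have "(a, b) = (jproj n Cs dC (C.J.class_of P), jmap n Ds dD f (C.J.class_of P))"
    using A B C.jproj_class_of[OF P] jmap_class_of[OF P] by simp
  moreover have "C.J.class_of P \<in> C.J.classes" using P C.J.classes_eq by auto
  ultimately show "(a, b) \<in> (\<lambda>w. (jproj n Cs dC w, jmap n Ds dD f w)) ` C.J.classes"
    by (simp add: image_iff) blast
qed

end

theorem proposition3p5:
  fixes Cs :: "nat \<Rightarrow> 'a set" and dC :: "nat \<Rightarrow> nat \<Rightarrow> bool \<Rightarrow> 'a \<Rightarrow> 'a"
    and Ds :: "nat \<Rightarrow> 'b set" and dD :: "nat \<Rightarrow> nat \<Rightarrow> bool \<Rightarrow> 'b \<Rightarrow> 'b"
    and f :: "nat \<Rightarrow> 'a \<Rightarrow> 'b" and n :: nat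
  assumes "is_cset Cs dC" and "is_cset Ds dD" and "is_cmap Cs dC Ds dD f"
  shows "homeomorphic_map (realisation (jcells n Cs) (jface n dC))
           (subtopology (prod_topology (realisation Cs dC) (realisation (jcells n Ds) (jface n dD)))
              {(a, b). realmap Ds dD f a = jproj n Ds dD b})
           (\<lambda>w. (jproj n Cs dC w, jmap n Ds dD f w))"
proof -
  interpret james_map Cs dC Ds dD n f
    using assms by (simp add: james_map_def james_map_axioms_def james_complex_def box_set_def)
  define g where "g = (\<lambda>w. (jproj n Cs dC w, jmap n Ds dD f w))"
  define Y where "Y = subtopology (prod_topology (realisation Cs dC) (realisation (jcells n Ds) (jface n dD)))
    {(a, b). realmap Ds dD f a = jproj n Ds dD b}"
  have Y: "topspace Y = (C.classes \<times> D.J.classes) \<inter> {(a, b). realmap Ds dD f a = jproj n Ds dD b}"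
    by (simp add: Y_def C.topspace_realisation D.J.topspace_realisation)
  have "homeomorphic_map (realisation (jcells n Cs) (jface n dC)) Y g"
  proof (rule homeomorphic_map_if_proper_component)
    show "Hausdorff_space Y"
      unfolding Y_def using C.Hausdorff_realisation D.J.Hausdorff_realisation
      by (intro Hausdorff_space_subtopology) (simp add: Hausdorff_space_prod_topology)
    show "continuous_map (realisation (jcells n Cs) (jface n dC)) Y g"
      unfolding Y_def g_def using C.continuous_map_jproj continuous_map_jmap pullback_map_mem
      by (auto intro!: continuous_map_into_subtopology simp: continuous_map_paired C.J.topspace_realisation)
    show "continuous_map Y (realisation Cs dC) fst"
      unfolding Y_def by (rule continuous_map_from_subtopology[OF continuous_map_fst])
    show "proper_map (realisation (jcells n Cs) (jface n dC)) (realisation Cs dC) (fst \<circ> g)"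
      using C.proper_map_jproj by (simp add: g_def o_def)
    show "g ` topspace (realisation (jcells n Cs) (jface n dC)) = topspace Y"
      unfolding Y C.J.topspace_realisation g_def using pullback_map_mem pullback_map_surj by blast
    show "inj_on g (topspace (realisation (jcells n Cs) (jface n dC)))"
      unfolding C.J.topspace_realisation g_def by (rule pullback_map_inj)
  qed
  then show ?thesis by (simp add: g_def Y_def)
qed

end
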